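(* Let $\kappa$ be an inaccessible cardinal and let $p:\widetilde{U}\to U$ be the morphism of $\mathbf{Gpd}^{\mathbf{G}}$ described in the context. For a morphism $f:A\to C$ in $\mathbf{Gpd}^{\mathbf{G}}$ the following are equivalent: (i) $f$ is a pullback of $p$ in $\mathbf{Gpd}^{\mathbf{G}}$; (ii) the underlying functor of groupoids of $f$ is a split fibration (an isofibration admitting a split cleavage) whose fibers are $\kappa$-small.
   Context: $\mathbf{Gpd}^{\mathbf{G}}$ is the category of groupoids equipped with an involution and functors commuting with the involutions. A groupoid is $\kappa$-small if its set of objects and all its hom-sets have cardinality $<\kappa$. For a functor $f$, the fiber over $x$ is the subgroupoid of objects over $x$ and morphisms over $1_x$. A split cleavage for an isofibration $f:A\to C$ assigns to each isomorphism $\sigma:x\to y$ in $C$ and each $z$ with $f(z)=x$ a morphism $c(\sigma,z)$ with domain $z$ and $f(c(\sigma,z))=\sigma$, such that $c(1_x,z)=1_z$ and $c(\tau\circ\sigma,z)=c(\tau,\mathrm{cod}\,c(\sigma,z))\circ c(\sigma,z)$. The groupoid $\widetilde{U}$: objects are tuples $(A_0,A_1,a,\varphi)$ with $A_0,A_1$ $\kappa$-small groupoids, $a$ an object of $A_0$, $\varphi:A_0\to A_1$ an isomorphism of groupoids; a morphism $(A_0,A_1,a,\varphi)\to(B_0,B_1,b,\psi)$ is a tuple $(\rho_0,\rho_1,\tau,\alpha)$ with $\rho_i:A_i\to B_i$ isomorphisms of groupoids, $\tau:\rho_0(a)\to b$ an isomorphism in $B_0$, $\alpha:\psi\circ\rho_0\Rightarrow\rho_1\circ\varphi$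 a natural isomorphism; composition $(\rho'_0,\rho'_1,\tau',\alpha')\circ(\rho_0,\rho_1,\tau,\alpha)=(\rho'_0\rho_0,\rho'_1\rho_1,\tau'\circ\rho'_0(\tau),\rho'_1(\alpha)\circ\alpha'_{\rho_0})$. Its involution sends $(A_0,A_1,a,\varphi)$ to $(A_1,A_0,\varphi(a),\varphi^{-1})$ and $(\rho_0,\rho_1,\tau,\alpha)$ to $(\rho_1,\rho_0,\psi(\tau)\circ\alpha_a^{-1},\psi^{-1}(\alpha^{-1}_{\varphi^{-1}(-)}))$. The groupoid $U$ is the unpointed version: objects $(A_0,A_1,\varphi)$, morphisms $(\rho_0,\rho_1,\alpha)$, with the analogous composition and involution $(A_0,A_1,\varphi)\mapsto(A_1,A_0,\varphi^{-1})$, $(\rho_0,\rho_1,\alpha)\mapsto(\rho_1,\rho_0,\psi^{-1}(\alpha^{-1}_{\varphi^{-1}(-)}))$. The morphism $p$ sends $(A_0,A_1,a,\varphi)\mapsto(A_0,A_1,\varphi)$ and $(\rho_0,\rho_1,\tau,\alpha)\mapsto(\rho_0,\rho_1,\alpha)$. *)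

theory Defs
  imports Main "HOL-Library.FuncSet"
begin

text \<open>An inaccessible cardinal, represented as a cardinal order on the whole universe
  of a type 'k (so the type 'k has exactly cardinality kappa): uncountable, regular,
  strong limit.\<close>
definition inaccessible :: "'k rel \<Rightarrow> bool" where
  "inaccessible kappa \<longleftrightarrow>
     card_order kappa \<and> ordLess2 natLeq kappa \<and> regularCard kappa \<and>
     (\<forall>S :: 'k set. ordLess2 (card_of S) kappa \<longrightarrow> ordLess2 (card_of (Pow S)) kappa)"

record ('o, 'm) gpd =
  Obj :: "'o set"
  Arr :: "'m set"
  Dom :: "'m \<Rightarrow> 'o"
  Cod :: "'m \<Rightarrow> 'o"
  Ide :: "'o \<Rightarrow> 'm"
  Cmp :: "'m \<Rightarrow> 'm \<Rightarrow> 'm"   \<comment> \<open>Cmp G g f = g composed after f\<close>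

definition hom :: "('o, 'm) gpd \<Rightarrow> 'o \<Rightarrow> 'o \<Rightarrow> 'm set" where
  "hom G x y = {m \<in> Arr G. Dom G m = x \<and> Cod G m = y}"

definition groupoid :: "('o, 'm) gpd \<Rightarrow> bool" where
  "groupoid G \<longleftrightarrow>
    (\<forall>m\<in>Arr G. Dom G m \<in> Obj G \<and> Cod G m \<in> Obj G) \<and>
    (\<forall>x\<in>Obj G. Ide G x \<in> hom G x x) \<and>
    (\<forall>f\<in>Arr G. \<forall>g\<in>Arr G. Cod G f = Dom G g \<longrightarrow>
        Cmp G g f \<in> hom G (Dom G f) (Cod G g)) \<and>
    (\<forall>f\<in>Arr G. \<forall>g\<in>Arr G. \<forall>h\<in>Arr G. Cod G f = Dom G g \<longrightarrow> Cod G g = Dom G h \<longrightarrow>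
        Cmp G h (Cmp G g f) = Cmp G (Cmp G h g) f) \<and>
    (\<forall>f\<in>Arr G. Cmp G (Ide G (Cod G f)) f = f \<and> Cmp G f (Ide G (Dom G f)) = f) \<and>
    (\<forall>f\<in>Arr G. \<exists>g\<in>hom G (Cod G f) (Dom G f).
        Cmp G g f = Ide G (Dom G f) \<and> Cmp G f g = Ide G (Cod G f))"

definition ginv :: "('o, 'm) gpd \<Rightarrow> 'm \<Rightarrow> 'm" where
  "ginv G f = (THE g. g \<in> hom G (Cod G f) (Dom G f) \<and>
                      Cmp G g f = Ide G (Dom G f) \<and> Cmp G f g = Ide G (Cod G f))"

text \<open>A groupoid given set-theoretically: its structure maps carry no data outside
  their domains of definition (so each groupoid occurs only once as an object of U).\<close>
definition canonical :: "('o, 'm) gpd \<Rightarrow> bool" where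
  "canonical G \<longleftrightarrow> Dom G \<in> extensional (Arr G) \<and> Cod G \<in> extensional (Arr G) \<and>
     Ide G \<in> extensional (Obj G) \<and>
     (\<forall>g f. \<not> (f \<in> Arr G \<and> g \<in> Arr G \<and> Cod G f = Dom G g) \<longrightarrow> Cmp G g f = undefined)"

definition small :: "'k rel \<Rightarrow> ('o, 'm) gpd \<Rightarrow> bool" where
  "small kappa G \<longleftrightarrow> ordLess2 (card_of (Obj G)) kappa \<and>
     (\<forall>x\<in>Obj G. \<forall>y\<in>Obj G. ordLess2 (card_of (hom G x y)) kappa)"

type_synonym ('o, 'm, 'p, 'n) fn = "('o \<Rightarrow> 'p) \<times> ('m \<Rightarrow> 'n)"

abbreviation fo :: "('o, 'm, 'p, 'n) fn \<Rightarrow> 'o \<Rightarrow> 'p" where "fo F \<equiv> fst F"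
abbreviation fm :: "('o, 'm, 'p, 'n) fn \<Rightarrow> 'm \<Rightarrow> 'n" where "fm F \<equiv> snd F"

definition is_functor :: "('o, 'm) gpd \<Rightarrow> ('p, 'n) gpd \<Rightarrow> ('o, 'm, 'p, 'n) fn \<Rightarrow> bool" where
  "is_functor G H F \<longleftrightarrow>
    (\<forall>x\<in>Obj G. fo F x \<in> Obj H) \<and>
    (\<forall>m\<in>Arr G. fm F m \<in> hom H (fo F (Dom G m)) (fo F (Cod G m))) \<and>
    (\<forall>x\<in>Obj G. fm F (Ide G x) = Ide H (fo F x)) \<and>
    (\<forall>f\<in>Arr G. \<forall>g\<in>Arr G. Cod G f = Dom G g \<longrightarrow>
        fm F (Cmp G g f) = Cmp H (fm F g) (fm F f))"

definition is_iso :: "('o, 'm) gpd \<Rightarrow> ('p, 'n) gpd \<Rightarrow> ('o, 'm, 'p, 'n) fn \<Rightarrow> bool" where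
  "is_iso G H F \<longleftrightarrow> is_functor G H F \<and>
     bij_betw (fo F) (Obj G) (Obj H) \<and> bij_betw (fm F) (Arr G) (Arr H)"

definition ext_fn :: "('o, 'm) gpd \<Rightarrow> ('o, 'm, 'p, 'n) fn \<Rightarrow> bool" where
  "ext_fn G F \<longleftrightarrow> fo F \<in> extensional (Obj G) \<and> fm F \<in> extensional (Arr G)"

definition fcomp :: "('o, 'm) gpd \<Rightarrow> ('p, 'n, 'q, 'l) fn \<Rightarrow> ('o, 'm, 'p, 'n) fn \<Rightarrow> ('o, 'm, 'q, 'l) fn" where
  "fcomp G F2 F1 = ((\<lambda>x\<in>Obj G. fo F2 (fo F1 x)), (\<lambda>m\<in>Arr G. fm F2 (fm F1 m)))"

definition fid :: "('o, 'm) gpd \<Rightarrow> ('o, 'm, 'o, 'm) fn" where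
  "fid G = ((\<lambda>x\<in>Obj G. x), (\<lambda>m\<in>Arr G. m))"

definition finv :: "('o, 'm) gpd \<Rightarrow> ('p, 'n) gpd \<Rightarrow> ('o, 'm, 'p, 'n) fn \<Rightarrow> ('p, 'n, 'o, 'm) fn" where
  "finv G H F = ((\<lambda>y\<in>Obj H. the_inv_into (Obj G) (fo F) y),
                 (\<lambda>n\<in>Arr H. the_inv_into (Arr G) (fm F) n))"

text \<open>Natural transformation alpha : F1 => F2 between functors G -> H; since H is a
  groupoid, it is automatically a natural isomorphism.\<close>
definition nat_iso :: "('o, 'm) gpd \<Rightarrow> ('p, 'n) gpd \<Rightarrow> ('o, 'm, 'p, 'n) fn \<Rightarrow>
                       ('o, 'm, 'p, 'n) fn \<Rightarrow> ('o \<Rightarrow> 'n) \<Rightarrow> bool" where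
  "nat_iso G H F1 F2 alpha \<longleftrightarrow>
    (\<forall>x\<in>Obj G. alpha x \<in> hom H (fo F1 x) (fo F2 x)) \<and>
    (\<forall>m\<in>Arr G. Cmp H (fm F2 m) (alpha (Dom G m)) = Cmp H (alpha (Cod G m)) (fm F1 m))"

section \<open>Groupoids with involution (the category Gpd^G)\<close>

definition gpdG :: "('o, 'm) gpd \<Rightarrow> ('o, 'm, 'o, 'm) fn \<Rightarrow> bool" where
  "gpdG G i \<longleftrightarrow> groupoid G \<and> is_functor G G i \<and>
     (\<forall>x\<in>Obj G. fo i (fo i x) = x) \<and> (\<forall>m\<in>Arr G. fm i (fm i m) = m)"

definition gpdG_mor :: "('o, 'm) gpd \<Rightarrow> ('o, 'm, 'o, 'm) fn \<Rightarrow> ('p, 'n) gpd \<Rightarrow>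
                        ('p, 'n, 'p, 'n) fn \<Rightarrow> ('o, 'm, 'p, 'n) fn \<Rightarrow> bool" where
  "gpdG_mor G i H j F \<longleftrightarrow> is_functor G H F \<and>
     (\<forall>x\<in>Obj G. fo F (fo i x) = fo j (fo F x)) \<and>
     (\<forall>m\<in>Arr G. fm F (fm i m) = fm j (fm F m))"

text \<open>Isomorphism in Gpd^G (its inverse then automatically commutes with the involutions).\<close>
definition gpdG_iso :: "('o, 'm) gpd \<Rightarrow> ('o, 'm, 'o, 'm) fn \<Rightarrow> ('p, 'n) gpd \<Rightarrow>
                        ('p, 'n, 'p, 'n) fn \<Rightarrow> ('o, 'm, 'p, 'n) fn \<Rightarrow> bool" where
  "gpdG_iso G i H j F \<longleftrightarrow> gpdG_mor G i H j F \<and>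
     bij_betw (fo F) (Obj G) (Obj H) \<and> bij_betw (fm F) (Arr G) (Arr H)"

definition pb_gpd :: "('co, 'cm) gpd \<Rightarrow> ('xo, 'xm) gpd \<Rightarrow> ('co, 'cm, 'wo, 'wm) fn \<Rightarrow>
                      ('xo, 'xm, 'wo, 'wm) fn \<Rightarrow> ('co \<times> 'xo, 'cm \<times> 'xm) gpd" where
  "pb_gpd C X h q = \<lparr>
     Obj = {(c, x). c \<in> Obj C \<and> x \<in> Obj X \<and> fo h c = fo q x},
     Arr = {(m, n). m \<in> Arr C \<and> n \<in> Arr X \<and> fm h m = fm q n},
     Dom = (\<lambda>(m, n). (Dom C m, Dom X n)),
     Cod = (\<lambda>(m, n). (Cod C m, Cod X n)),
     Ide = (\<lambda>(c, x). (Ide C c, Ide X x)),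
     Cmp = (\<lambda>(g, g') (f, f'). (Cmp C g f, Cmp X g' f')) \<rparr>"

definition pb_inv :: "('co, 'cm, 'co, 'cm) fn \<Rightarrow> ('xo, 'xm, 'xo, 'xm) fn \<Rightarrow>
                      ('co \<times> 'xo, 'cm \<times> 'xm, 'co \<times> 'xo, 'cm \<times> 'xm) fn" where
  "pb_inv iC iX = ((\<lambda>(c, x). (fo iC c, fo iX x)), (\<lambda>(m, n). (fm iC m, fm iX n)))"

definition is_pullback_square ::
  "('ao, 'am) gpd \<Rightarrow> ('ao, 'am, 'ao, 'am) fn \<Rightarrow>
   ('co, 'cm) gpd \<Rightarrow> ('co, 'cm, 'co, 'cm) fn \<Rightarrow>
   ('xo, 'xm) gpd \<Rightarrow> ('xo, 'xm, 'xo, 'xm) fn \<Rightarrow>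
   ('wo, 'wm) gpd \<Rightarrow> ('wo, 'wm, 'wo, 'wm) fn \<Rightarrow>
   ('ao, 'am, 'co, 'cm) fn \<Rightarrow> ('ao, 'am, 'xo, 'xm) fn \<Rightarrow>
   ('co, 'cm, 'wo, 'wm) fn \<Rightarrow> ('xo, 'xm, 'wo, 'wm) fn \<Rightarrow> bool" where
  "is_pullback_square A iA C iC X iX W iW f g h q \<longleftrightarrow>
     gpdG_mor A iA C iC f \<and> gpdG_mor A iA X iX g \<and>
     gpdG_mor C iC W iW h \<and> gpdG_mor X iX W iW q \<and>
     (\<forall>a\<in>Obj A. fo h (fo f a) = fo q (fo g a)) \<and>
     (\<forall>m\<in>Arr A. fm h (fm f m) = fm q (fm g m)) \<and>
     gpdG_iso A iA (pb_gpd C X h q) (pb_inv iC iX)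
        ((\<lambda>a. (fo f a, fo g a)), (\<lambda>m. (fm f m, fm g m)))"

section \<open>The groupoids U and U-tilde and the morphism p\<close>

type_synonym 'k G = "('k, 'k) gpd"
type_synonym 'k F = "('k, 'k, 'k, 'k) fn"
type_synonym 'k uobj = "'k G \<times> 'k G \<times> 'k F"
type_synonym 'k uarr = "'k uobj \<times> 'k uobj \<times> 'k F \<times> 'k F \<times> ('k \<Rightarrow> 'k)"
type_synonym 'k tobj = "'k G \<times> 'k G \<times> 'k \<times> 'k F"
type_synonym 'k tarr = "'k tobj \<times> 'k tobj \<times> 'k F \<times> 'k F \<times> 'k \<times> ('k \<Rightarrow> 'k)"

text \<open>kappa-small groupoids (as sets, with elements taken from the type 'k of size kappa).\<close>
definition sgpd :: "'k rel \<Rightarrow> 'k G \<Rightarrow> bool" where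
  "sgpd kappa A \<longleftrightarrow> groupoid A \<and> canonical A \<and> small kappa A"

definition U_obj :: "'k rel \<Rightarrow> 'k uobj set" where
  "U_obj kappa = {(A0, A1, phi). sgpd kappa A0 \<and> sgpd kappa A1 \<and>
                                 is_iso A0 A1 phi \<and> ext_fn A0 phi}"

definition U_arr :: "'k rel \<Rightarrow> 'k uarr set" where
  "U_arr kappa = {((A0, A1, phi), (B0, B1, psi), rho0, rho1, alpha).
      (A0, A1, phi) \<in> U_obj kappa \<and> (B0, B1, psi) \<in> U_obj kappa \<and>
      is_iso A0 B0 rho0 \<and> ext_fn A0 rho0 \<and> is_iso A1 B1 rho1 \<and> ext_fn A1 rho1 \<and>
      alpha \<in> extensional (Obj A0) \<and>
      nat_iso A0 B1 (fcomp A0 psi rho0) (fcomp A0 rho1 phi) alpha}"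

definition U_ide :: "'k uobj \<Rightarrow> 'k uarr" where
  "U_ide s = (case s of (A0, A1, phi) \<Rightarrow>
      (s, s, fid A0, fid A1, (\<lambda>x\<in>Obj A0. Ide A1 (fo phi x))))"

definition U_cmp :: "'k uarr \<Rightarrow> 'k uarr \<Rightarrow> 'k uarr" where
  "U_cmp g f = (case f of (s, t, rho0, rho1, alpha) \<Rightarrow>
     case g of (t', u, rho0', rho1', alpha') \<Rightarrow>
     case s of (A0, A1, phi) \<Rightarrow> case u of (C0, C1, chi) \<Rightarrow>
       (s, u, fcomp A0 rho0' rho0, fcomp A1 rho1' rho1,
        (\<lambda>x\<in>Obj A0. Cmp C1 (fm rho1' (alpha x)) (alpha' (fo rho0 x)))))"

definition U :: "'k rel \<Rightarrow> ('k uobj, 'k uarr) gpd" where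
  "U kappa = \<lparr> Obj = U_obj kappa, Arr = U_arr kappa,
               Dom = (\<lambda>m. fst m), Cod = (\<lambda>m. fst (snd m)),
               Ide = U_ide, Cmp = U_cmp \<rparr>"

definition U_inv_obj :: "'k uobj \<Rightarrow> 'k uobj" where
  "U_inv_obj s = (case s of (A0, A1, phi) \<Rightarrow> (A1, A0, finv A0 A1 phi))"

definition U_inv_arr :: "'k uarr \<Rightarrow> 'k uarr" where
  "U_inv_arr m = (case m of (s, t, rho0, rho1, alpha) \<Rightarrow>
     case s of (A0, A1, phi) \<Rightarrow> case t of (B0, B1, psi) \<Rightarrow>
       (U_inv_obj s, U_inv_obj t, rho1, rho0,
        (\<lambda>y\<in>Obj A1. fm (finv B0 B1 psi) (ginv B1 (alpha (fo (finv A0 A1 phi) y))))))"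

definition U_inv :: "('k uobj, 'k uarr, 'k uobj, 'k uarr) fn" where
  "U_inv = (U_inv_obj, U_inv_arr)"

definition Ut_obj :: "'k rel \<Rightarrow> 'k tobj set" where
  "Ut_obj kappa = {(A0, A1, a, phi). (A0, A1, phi) \<in> U_obj kappa \<and> a \<in> Obj A0}"

definition Ut_arr :: "'k rel \<Rightarrow> 'k tarr set" where
  "Ut_arr kappa = {((A0, A1, a, phi), (B0, B1, b, psi), rho0, rho1, tau, alpha).
      (A0, A1, a, phi) \<in> Ut_obj kappa \<and> (B0, B1, b, psi) \<in> Ut_obj kappa \<and>
      is_iso A0 B0 rho0 \<and> ext_fn A0 rho0 \<and> is_iso A1 B1 rho1 \<and> ext_fn A1 rho1 \<and>
      tau \<in> hom B0 (fo rho0 a) b \<and>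
      alpha \<in> extensional (Obj A0) \<and>
      nat_iso A0 B1 (fcomp A0 psi rho0) (fcomp A0 rho1 phi) alpha}"

definition Ut_ide :: "'k tobj \<Rightarrow> 'k tarr" where
  "Ut_ide s = (case s of (A0, A1, a, phi) \<Rightarrow>
      (s, s, fid A0, fid A1, Ide A0 a, (\<lambda>x\<in>Obj A0. Ide A1 (fo phi x))))"

definition Ut_cmp :: "'k tarr \<Rightarrow> 'k tarr \<Rightarrow> 'k tarr" where
  "Ut_cmp g f = (case f of (s, t, rho0, rho1, tau, alpha) \<Rightarrow>
     case g of (t', u, rho0', rho1', tau', alpha') \<Rightarrow>
     case s of (A0, A1, a, phi) \<Rightarrow> case u of (C0, C1, c, chi) \<Rightarrow>
       (s, u, fcomp A0 rho0' rho0, fcomp A1 rho1' rho1,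
        Cmp C0 tau' (fm rho0' tau),
        (\<lambda>x\<in>Obj A0. Cmp C1 (fm rho1' (alpha x)) (alpha' (fo rho0 x)))))"

definition Ut :: "'k rel \<Rightarrow> ('k tobj, 'k tarr) gpd" where
  "Ut kappa = \<lparr> Obj = Ut_obj kappa, Arr = Ut_arr kappa,
                Dom = (\<lambda>m. fst m), Cod = (\<lambda>m. fst (snd m)),
                Ide = Ut_ide, Cmp = Ut_cmp \<rparr>"

definition Ut_inv_obj :: "'k tobj \<Rightarrow> 'k tobj" where
  "Ut_inv_obj s = (case s of (A0, A1, a, phi) \<Rightarrow> (A1, A0, fo phi a, finv A0 A1 phi))"

definition Ut_inv_arr :: "'k tarr \<Rightarrow> 'k tarr" where
  "Ut_inv_arr m = (case m of (s, t, rho0, rho1, tau, alpha) \<Rightarrow>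
     case s of (A0, A1, a, phi) \<Rightarrow> case t of (B0, B1, b, psi) \<Rightarrow>
       (Ut_inv_obj s, Ut_inv_obj t, rho1, rho0,
        Cmp B1 (fm psi tau) (ginv B1 (alpha a)),
        (\<lambda>y\<in>Obj A1. fm (finv B0 B1 psi) (ginv B1 (alpha (fo (finv A0 A1 phi) y))))))"

definition Ut_inv :: "('k tobj, 'k tarr, 'k tobj, 'k tarr) fn" where
  "Ut_inv = (Ut_inv_obj, Ut_inv_arr)"

definition p_obj :: "'k tobj \<Rightarrow> 'k uobj" where
  "p_obj s = (case s of (A0, A1, a, phi) \<Rightarrow> (A0, A1, phi))"

definition p_arr :: "'k tarr \<Rightarrow> 'k uarr" where
  "p_arr m = (case m of (s, t, rho0, rho1, tau, alpha) \<Rightarrow> (p_obj s, p_obj t, rho0, rho1, alpha))"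

definition p :: "('k tobj, 'k tarr, 'k uobj, 'k uarr) fn" where
  "p = (p_obj, p_arr)"

definition is_pullback_of_p :: "'k rel \<Rightarrow> ('ao, 'am) gpd \<Rightarrow> ('ao, 'am, 'ao, 'am) fn \<Rightarrow>
    ('co, 'cm) gpd \<Rightarrow> ('co, 'cm, 'co, 'cm) fn \<Rightarrow> ('ao, 'am, 'co, 'cm) fn \<Rightarrow> bool" where
  "is_pullback_of_p kappa A iA C iC f \<longleftrightarrow>
     (\<exists>(g :: ('ao, 'am, 'k tobj, 'k tarr) fn) (h :: ('co, 'cm, 'k uobj, 'k uarr) fn).
        is_pullback_square A iA C iC (Ut kappa) Ut_inv (U kappa) U_inv f g h p)"

definition fiber :: "('ao, 'am) gpd \<Rightarrow> ('co, 'cm) gpd \<Rightarrow> ('ao, 'am, 'co, 'cm) fn \<Rightarrow> 'co \<Rightarrow> ('ao, 'am) gpd" where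
  "fiber A C f x = A \<lparr> Obj := {z \<in> Obj A. fo f z = x},
                       Arr := {m \<in> Arr A. fm f m = Ide C x} \<rparr>"

definition isofibration :: "('ao, 'am) gpd \<Rightarrow> ('co, 'cm) gpd \<Rightarrow> ('ao, 'am, 'co, 'cm) fn \<Rightarrow> bool" where
  "isofibration A C f \<longleftrightarrow>
     (\<forall>\<sigma>\<in>Arr C. \<forall>z\<in>Obj A. fo f z = Dom C \<sigma> \<longrightarrow>
        (\<exists>m\<in>Arr A. Dom A m = z \<and> fm f m = \<sigma>))"

definition split_cleavage :: "('ao, 'am) gpd \<Rightarrow> ('co, 'cm) gpd \<Rightarrow> ('ao, 'am, 'co, 'cm) fn \<Rightarrow>
                              ('cm \<Rightarrow> 'ao \<Rightarrow> 'am) \<Rightarrow> bool" where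
  "split_cleavage A C f c \<longleftrightarrow>
     (\<forall>\<sigma>\<in>Arr C. \<forall>z\<in>Obj A. fo f z = Dom C \<sigma> \<longrightarrow>
        c \<sigma> z \<in> Arr A \<and> Dom A (c \<sigma> z) = z \<and> fm f (c \<sigma> z) = \<sigma>) \<and>
     (\<forall>z\<in>Obj A. c (Ide C (fo f z)) z = Ide A z) \<and>
     (\<forall>\<sigma>\<in>Arr C. \<forall>\<tau>\<in>Arr C. \<forall>z\<in>Obj A. Cod C \<sigma> = Dom C \<tau> \<longrightarrow> fo f z = Dom C \<sigma> \<longrightarrow>
        c (Cmp C \<tau> \<sigma>) z = Cmp A (c \<tau> (Cod A (c \<sigma> z))) (c \<sigma> z))"

definition split_fibration :: "('ao, 'am) gpd \<Rightarrow> ('co, 'cm) gpd \<Rightarrow> ('ao, 'am, 'co, 'cm) fn \<Rightarrow> bool" where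
  "split_fibration A C f \<longleftrightarrow> isofibration A C f \<and> (\<exists>c. split_cleavage A C f c)"

end

theory Submission
  imports Defs
begin

text \<open>
  The morphism p has a split cleavage (lift an arrow of U with an identity as point component),
  and its fiber over (A0, A1, phi) is a copy of A0, hence kappa-small. Both properties pass to
  pullbacks, because a pullback square identifies A with the standard pullback.

  Conversely, given a split cleavage c of f with kappa-small fibers, every fiber can be encoded as
  a kappa-small groupoid with elements in 'k, i.e. as an object of U. Transport along c turns
  every arrow s of C into an isomorphism of encoded fibers, the involution of A restricts to
  isomorphisms between the fibers over x and iC x, and the failure of c to commute with the
  involutions provides the natural isomorphism alpha. This defines the classifying map
  cls : C -> U, and tcls : A -> U-tilde additionally marks the point in the fiber. The
  comparison map from A to the pullback is bijective because every arrow m of A factors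
  uniquely as a vertical arrow after the lift c (f m) (Dom m).
\<close>

unbundle cardinal_syntax

locale gpd_groupoid = fixes G :: "('o,'m) gpd" assumes groupoid: "groupoid G"
begin

lemma dom_obj[simp]: "m \<in> Arr G \<Longrightarrow> Dom G m \<in> Obj G"
  and cod_obj[simp]: "m \<in> Arr G \<Longrightarrow> Cod G m \<in> Obj G"
  using groupoid unfolding groupoid_def by auto

lemma ide_arr[simp]: "x \<in> Obj G \<Longrightarrow> Ide G x \<in> Arr G"
  and ide_dom[simp]: "x \<in> Obj G \<Longrightarrow> Dom G (Ide G x) = x"
  and ide_cod[simp]: "x \<in> Obj G \<Longrightarrow> Cod G (Ide G x) = x"
  using groupoid unfolding groupoid_def hom_def by auto

lemma cmp_arr[simp]:
  "f \<in> Arr G \<Longrightarrow> g \<in> Arr G \<Longrightarrow> Cod G f = Dom G g \<Longrightarrow> Cmp G g f \<in> Arr G"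
  and cmp_dom[simp]: "f \<in> Arr G \<Longrightarrow> g \<in> Arr G \<Longrightarrow> Cod G f = Dom G g \<Longrightarrow> Dom G (Cmp G g f) = Dom G f"
  and cmp_cod[simp]: "f \<in> Arr G \<Longrightarrow> g \<in> Arr G \<Longrightarrow> Cod G f = Dom G g \<Longrightarrow> Cod G (Cmp G g f) = Cod G g"
  using groupoid unfolding groupoid_def hom_def by blast+

lemma cmp_assoc[simp]:
  "f \<in> Arr G \<Longrightarrow> g \<in> Arr G \<Longrightarrow> h \<in> Arr G \<Longrightarrow> Cod G f = Dom G g \<Longrightarrow> Cod G g = Dom G h \<Longrightarrow>
   Cmp G (Cmp G h g) f = Cmp G h (Cmp G g f)"
  using groupoid unfolding groupoid_def by metis

lemma cmp_ide_left[simp]: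
  "f \<in> Arr G \<Longrightarrow> Cod G f = y \<Longrightarrow> Cmp G (Ide G y) f = f"
  and cmp_ide_right[simp]: "f \<in> Arr G \<Longrightarrow> Dom G f = y \<Longrightarrow> Cmp G f (Ide G y) = f"
  using groupoid unfolding groupoid_def by blast+

lemma inverse_unique:
  assumes f: "f \<in> Arr G" and g: "g \<in> hom G (Cod G f) (Dom G f)"
    and gf: "Cmp G g f = Ide G (Dom G f)"
    and g': "g' \<in> hom G (Cod G f) (Dom G f)" and fg': "Cmp G f g' = Ide G (Cod G f)"
  shows "g = g'"
proof -
  have g_arr: "g \<in> Arr G" "Dom G g = Cod G f" "Cod G g = Dom G f" using g by (auto simp: hom_def)
  have g'_arr: "g' \<in> Arr G" "Dom G g' = Cod G f"
    "Cod G g' = Dom G f" using g' by (auto simp: hom_def)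
  have "g = Cmp G g (Cmp G f g')" using fg' g_arr by simp
  also have "\<dots> = Cmp G (Cmp G g f) g'" using f g_arr g'_arr by simp
  also have "\<dots> = g'" using gf g'_arr by simp
  finally show ?thesis .
qed

lemma ginv_prop:
  assumes f: "f \<in> Arr G"
  shows "ginv G f \<in> hom G (Cod G f) (Dom G f) \<and>
         Cmp G (ginv G f) f = Ide G (Dom G f) \<and> Cmp G f (ginv G f) = Ide G (Cod G f)"
proof -
  obtain g where g: "g \<in> hom G (Cod G f) (Dom G f)" "Cmp G g f = Ide G (Dom G f)"
    "Cmp G f g = Ide G (Cod G f)"
    using groupoid f unfolding groupoid_def by blast
  show ?thesis
    unfolding ginv_def
  proof (rule theI[of _ g])
    fix g' assume "g' \<in> hom G (Cod G f) (Dom G f) \<and>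
      Cmp G g' f = Ide G (Dom G f) \<and> Cmp G f g' = Ide G (Cod G f)"
    then show "g' = g" using inverse_unique[OF f] g by blast
  qed (use g in blast)
qed

lemma ginv_arr[simp]: "f \<in> Arr G \<Longrightarrow> ginv G f \<in> Arr G"
  and ginv_dom[simp]: "f \<in> Arr G \<Longrightarrow> Dom G (ginv G f) = Cod G f"
  and ginv_cod[simp]: "f \<in> Arr G \<Longrightarrow> Cod G (ginv G f) = Dom G f"
  and cmp_ginv_left[simp]: "f \<in> Arr G \<Longrightarrow> Cmp G (ginv G f) f = Ide G (Dom G f)"
  and cmp_ginv_right[simp]: "f \<in> Arr G \<Longrightarrow> Cmp G f (ginv G f) = Ide G (Cod G f)"
  using ginv_prop[of f] by (auto simp: hom_def)

lemma cmp_ginv_cancel_left[simp]: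
  "f \<in> Arr G \<Longrightarrow> x \<in> Arr G \<Longrightarrow> Cod G x = Dom G f \<Longrightarrow> Cmp G (ginv G f) (Cmp G f x) = x"
  by (subst cmp_assoc[symmetric]) auto

lemma cmp_ginv_cancel_right[simp]:
  "f \<in> Arr G \<Longrightarrow> x \<in> Arr G \<Longrightarrow> Cod G x = Cod G f \<Longrightarrow> Cmp G f (Cmp G (ginv G f) x) = x"
  by (subst cmp_assoc[symmetric]) auto

lemma ginv_eqI:
  "f \<in> Arr G \<Longrightarrow> g \<in> Arr G \<Longrightarrow> Dom G g = Cod G f \<Longrightarrow> Cod G g = Dom G f \<Longrightarrow>
   Cmp G g f = Ide G (Dom G f) \<Longrightarrow> ginv G f = g"
  using inverse_unique[of f g "ginv G f"] by (auto simp: hom_def)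

lemma ginv_ginv[simp]: "f \<in> Arr G \<Longrightarrow> ginv G (ginv G f) = f"
  by (rule ginv_eqI) auto

lemma ginv_ide[simp]: "x \<in> Obj G \<Longrightarrow> ginv G (Ide G x) = Ide G x"
  by (rule ginv_eqI) auto

lemma ginv_cmp:
  "f \<in> Arr G \<Longrightarrow> g \<in> Arr G \<Longrightarrow> Cod G f = Dom G g \<Longrightarrow>
   ginv G (Cmp G g f) = Cmp G (ginv G f) (ginv G g)"
  by (rule ginv_eqI) auto

end

locale gpd_functor =
  fixes G :: "('o, 'm) gpd" and H :: "('p, 'n) gpd" and F :: "('o, 'm, 'p, 'n) fn"
  assumes functorial: "is_functor G H F"
begin

lemma map_obj[simp]: "x \<in> Obj G \<Longrightarrow> fo F x \<in> Obj H"
  and map_arr[simp]: "m \<in> Arr G \<Longrightarrow> fm F m \<in> Arr H"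
  and map_dom[simp]: "m \<in> Arr G \<Longrightarrow> Dom H (fm F m) = fo F (Dom G m)"
  and map_cod[simp]: "m \<in> Arr G \<Longrightarrow> Cod H (fm F m) = fo F (Cod G m)"
  and map_ide[simp]: "x \<in> Obj G \<Longrightarrow> fm F (Ide G x) = Ide H (fo F x)"
  and map_cmp[simp]: "m \<in> Arr G \<Longrightarrow> n \<in> Arr G \<Longrightarrow> Cod G m = Dom G n \<Longrightarrow>
                        fm F (Cmp G n m) = Cmp H (fm F n) (fm F m)"
  using functorial unfolding is_functor_def hom_def by auto

lemma map_ginv:
  assumes G: "gpd_groupoid G" and H: "gpd_groupoid H" and m: "m \<in> Arr G"
  shows "fm F (ginv G m) = ginv H (fm F m)"
proof -
  interpret G: gpd_groupoid G by (rule G)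
  interpret H: gpd_groupoid H by (rule H)
  have "Cmp H (fm F (ginv G m)) (fm F m) = Ide H (fo F (Dom G m))"
    using m map_cmp[of m "ginv G m"] by simp
  then show ?thesis using m by (intro H.ginv_eqI[symmetric]) auto
qed

end

lemma infinite_card_order_UNIV:
  fixes kappa :: "'k rel"
  assumes co: "card_order kappa" and nl: "natLeq <o kappa"
  shows "Card_order kappa \<and> Field kappa = UNIV \<and> |UNIV::'k set| =o kappa \<and> infinite (UNIV::'k set)"
proof -
  have F: "Field kappa = UNIV" and Co: "Card_order kappa" using card_order_on_Card_order[OF co] by auto
  have i: "|UNIV::'k set| =o kappa" using card_of_Field_ordIso[OF Co] F by simp
  have "natLeq \<le>o |UNIV::'k set|"
    using ordLeq_ordIso_trans[OF ordLess_imp_ordLeq[OF nl] ordIso_symmetric[OF i]] .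
  then show ?thesis using F Co i infinite_iff_natLeq_ordLeq by blast
qed

lemma ex_inj_on_UNION_into_card:
  fixes kappa :: "'k rel" and I :: "'i set" and B :: "'i \<Rightarrow> 'x set"
  assumes "card_order kappa" "natLeq <o kappa" "|I| \<le>o kappa" "\<forall>i\<in>I. |B i| <o kappa"
  shows "\<exists>e::'x\<Rightarrow>'k. inj_on e (\<Union>i\<in>I. B i)"
proof -
  have i: "|UNIV::'k set| =o kappa" and inf: "infinite (UNIV::'k set)"
    using infinite_card_order_UNIV[OF assms(1,2)] by blast+
  have "|I| \<le>o |UNIV::'k set|" using ordLeq_ordIso_trans[OF assms(3) ordIso_symmetric[OF i]] .
  moreover have "\<forall>i\<in>I. |B i| \<le>o |UNIV::'k set|"
    using assms(4) ordLess_imp_ordLeq ordLess_ordIso_trans ordIso_symmetric[OF i] by blast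
  ultimately have "|\<Union>i\<in>I. B i| \<le>o |UNIV::'k set|"
    using card_of_UNION_ordLeq_infinite[OF inf] by blast
  then show ?thesis using card_of_ordLeq[of "\<Union>i\<in>I. B i" "UNIV::'k set"] by blast
qed

lemma ex_inj_on_into_card:
  fixes kappa :: "'k rel" and S :: "'x set"
  assumes "card_order kappa" "natLeq <o kappa" "|S| <o kappa"
  shows "\<exists>e::'x\<Rightarrow>'k. inj_on e S"
proof -
  have "|UNIV::'k set| =o kappa" using infinite_card_order_UNIV[OF assms(1,2)] by blast
  then have "|S| \<le>o |UNIV::'k set|"
    using assms(3) ordLess_imp_ordLeq ordLess_ordIso_trans ordIso_symmetric by blast
  then show ?thesis using card_of_ordLeq[of S "UNIV::'k set"] by blast
qed

lemma card_of_Times_ordLeq_infinite_card: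
  fixes kappa :: "'k rel"
  assumes "card_order kappa" "natLeq <o kappa" "|S| <o kappa" "|T| <o kappa"
  shows "|S \<times> T| \<le>o kappa"
proof -
  have "Card_order kappa" "Field kappa = UNIV" "infinite (UNIV::'k set)"
    using infinite_card_order_UNIV[OF assms(1,2)] by blast+
  then show ?thesis
    using card_of_Times_ordLeq_infinite_Field[of kappa S T]
      ordLess_imp_ordLeq[OF assms(3)] ordLess_imp_ordLeq[OF assms(4)] by simp
qed

lemma small_if_embeds:
  assumes H: "small kappa H"
    and obj: "inj_on F0 (Obj G)" "F0 ` Obj G \<subseteq> Obj H"
    and hom: "\<And>x y. x \<in> Obj G \<Longrightarrow> y \<in> Obj G \<Longrightarrow>
                 inj_on F1 (hom G x y) \<and> F1 ` hom G x y \<subseteq> hom H (F0 x) (F0 y)"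
  shows "small kappa G"
  unfolding small_def
proof (intro conjI ballI)
  have "|Obj G| \<le>o |Obj H|" using obj card_of_ordLeq by blast
  then show "|Obj G| <o kappa" using H ordLeq_ordLess_trans unfolding small_def by blast
next
  fix x y assume x: "x \<in> Obj G" and y: "y \<in> Obj G"
  have "|hom G x y| \<le>o |hom H (F0 x) (F0 y)|" using hom[OF x y] card_of_ordLeq by blast
  moreover have "|hom H (F0 x) (F0 y)| <o kappa" using H x y obj(2) unfolding small_def by blast
  ultimately show "|hom G x y| <o kappa" using ordLeq_ordLess_trans by blast
qed

lemma U_simps[simp]:
  "Obj (U kappa) = U_obj kappa" "Arr (U kappa) = U_arr kappa"
  "Dom (U kappa) = fst" "Cod (U kappa) = (\<lambda>m. fst (snd m))" "Ide (U kappa) = U_ide"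
    "Cmp (U kappa) = U_cmp"
  by (simp_all add: U_def)

lemma Ut_simps[simp]:
  "Obj (Ut kappa) = Ut_obj kappa" "Arr (Ut kappa) = Ut_arr kappa"
  "Dom (Ut kappa) = fst" "Cod (Ut kappa) = (\<lambda>m. fst (snd m))" "Ide (Ut kappa) = Ut_ide"
    "Cmp (Ut kappa) = Ut_cmp"
  by (simp_all add: Ut_def)

lemma p_simps[simp]: "fo p = p_obj" "fm p = p_arr"
  by (simp_all add: p_def)

lemma pb_gpd_simps[simp]:
  "Obj (pb_gpd C X h q) = {(c, x). c \<in> Obj C \<and> x \<in> Obj X \<and> fo h c = fo q x}"
  "Arr (pb_gpd C X h q) = {(m, n). m \<in> Arr C \<and> n \<in> Arr X \<and> fm h m = fm q n}"
  "Dom (pb_gpd C X h q) = (\<lambda>(m, n). (Dom C m, Dom X n))"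
  "Cod (pb_gpd C X h q) = (\<lambda>(m, n). (Cod C m, Cod X n))"
  "Ide (pb_gpd C X h q) = (\<lambda>(c, x). (Ide C c, Ide X x))"
  "Cmp (pb_gpd C X h q) = (\<lambda>(g, g') (f, f'). (Cmp C g f, Cmp X g' f'))"
  by (simp_all add: pb_gpd_def)

lemma U_obj_iff: "(A0, A1, phi) \<in> U_obj kappa \<longleftrightarrow>
    sgpd kappa A0 \<and> sgpd kappa A1 \<and> is_iso A0 A1 phi \<and> ext_fn A0 phi"
  unfolding U_obj_def by simp

lemma Ut_obj_iff:
  "(A0, A1, a, phi) \<in> Ut_obj kappa \<longleftrightarrow> (A0, A1, phi) \<in> U_obj kappa \<and> a \<in> Obj A0"
  unfolding Ut_obj_def by simp

lemma U_arr_iff: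
  "((A0, A1, phi), (B0, B1, psi), rho0, rho1, alpha) \<in> U_arr kappa \<longleftrightarrow>
    (A0, A1, phi) \<in> U_obj kappa \<and> (B0, B1, psi) \<in> U_obj kappa \<and>
    is_iso A0 B0 rho0 \<and> ext_fn A0 rho0 \<and> is_iso A1 B1 rho1 \<and> ext_fn A1 rho1 \<and>
    alpha \<in> extensional (Obj A0) \<and>
    nat_iso A0 B1 (fcomp A0 psi rho0) (fcomp A0 rho1 phi) alpha"
  unfolding U_arr_def by simp

lemma Ut_arr_iff:
  "((A0, A1, a, phi), (B0, B1, b, psi), rho0, rho1, tau, alpha) \<in> Ut_arr kappa \<longleftrightarrow>
    (A0, A1, a, phi) \<in> Ut_obj kappa \<and> (B0, B1, b, psi) \<in> Ut_obj kappa \<and>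
    is_iso A0 B0 rho0 \<and> ext_fn A0 rho0 \<and> is_iso A1 B1 rho1 \<and> ext_fn A1 rho1 \<and>
    tau \<in> hom B0 (fo rho0 a) b \<and>
    alpha \<in> extensional (Obj A0) \<and>
    nat_iso A0 B1 (fcomp A0 psi rho0) (fcomp A0 rho1 phi) alpha"
  unfolding Ut_arr_def by simp

lemma sgpd_groupoid: "sgpd kappa A \<Longrightarrow> gpd_groupoid A"
  by (simp add: sgpd_def gpd_groupoid_def)

lemma p_gpdG_mor:
  fixes kappa :: "'k rel"
  shows "gpdG_mor (Ut kappa) Ut_inv (U kappa) U_inv p"
  unfolding gpdG_mor_def is_functor_def Ut_inv_def U_inv_def fst_conv snd_conv Ut_simps U_simps
    p_simps
proof (intro conjI ballI impI)
  fix x assume "x \<in> Ut_obj kappa" then show "p_obj x \<in> U_obj kappa"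
    by (cases x) (auto simp: Ut_obj_iff p_obj_def)
next
  fix m assume m: "m \<in> Ut_arr kappa"
  obtain A0 A1 a phi B0 B1 b psi r0 r1 tau al where "m = ((A0,A1,a,phi),(B0,B1,b,psi),r0,r1,tau,al)"
    by (cases m) auto
  then show "p_arr m \<in> hom (U kappa) (p_obj (fst m)) (p_obj (fst (snd m)))"
    using m by (simp add: hom_def p_arr_def p_obj_def Ut_arr_iff U_arr_iff Ut_obj_iff)
next
  fix x assume "x \<in> Ut_obj kappa" then show "p_arr (Ut_ide x) = U_ide (p_obj x)"
    by (cases x) (simp add: p_arr_def p_obj_def Ut_ide_def U_ide_def)
next
  fix m n :: "'k tarr"
  obtain s t r0 r1 tau al where m: "m = (s,t,r0,r1,tau,al)" by (cases m) auto
  obtain s' t' r0' r1' tau' al' where n: "n = (s',t',r0',r1',tau',al')" by (cases n) auto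
  obtain A0 A1 a phi where "s = (A0,A1,a,phi)" by (cases s) auto
  moreover obtain C0 C1 cc chi where "t' = (C0,C1,cc,chi)" by (cases t') auto
  ultimately show "p_arr (Ut_cmp n m) = U_cmp (p_arr n) (p_arr m)"
    by (simp add: m n p_arr_def p_obj_def Ut_cmp_def U_cmp_def)
next
  fix x assume "x \<in> Ut_obj kappa" then show "p_obj (Ut_inv_obj x) = U_inv_obj (p_obj x)"
    by (cases x) (simp add: p_obj_def Ut_inv_obj_def U_inv_obj_def)
next
  fix m :: "'k tarr"
  obtain s t r0 r1 tau al where m: "m = (s,t,r0,r1,tau,al)" by (cases m) auto
  obtain A0 A1 a phi where "s = (A0,A1,a,phi)" by (cases s) auto
  moreover obtain B0 B1 b psi where "t = (B0,B1,b,psi)" by (cases t) auto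
  ultimately show "p_arr (Ut_inv_arr m) = U_inv_arr (p_arr m)"
    by (simp add: m p_arr_def p_obj_def Ut_inv_arr_def U_inv_arr_def Ut_inv_obj_def U_inv_obj_def)
qed

definition p_lift :: "'k uarr \<Rightarrow> 'k tobj \<Rightarrow> 'k tarr" where
  "p_lift \<sigma> z = (case \<sigma> of (_, (B0, B1, psi), rho0, rho1, alpha) \<Rightarrow> case z of (_, _, a, _) \<Rightarrow>
     (z, (B0, B1, fo rho0 a, psi), rho0, rho1, Ide B0 (fo rho0 a), alpha))"

lemma p_lift_simp: "p_lift (s, (B0, B1, psi), rho0, rho1, alpha) (A0, A1, a, phi) =
   ((A0, A1, a, phi), (B0, B1, fo rho0 a, psi), rho0, rho1, Ide B0 (fo rho0 a), alpha)"
  unfolding p_lift_def by simp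

lemma p_lift_lifts:
  assumes \<sigma>: "\<sigma> \<in> U_arr kappa" and z: "z \<in> Ut_obj kappa" and e: "p_obj z = fst \<sigma>"
  shows "p_lift \<sigma> z \<in> Ut_arr kappa \<and> fst (p_lift \<sigma> z) = z \<and> p_arr (p_lift \<sigma> z) = \<sigma>"
proof -
  obtain A0 A1 phi B0 B1 psi rho0 rho1 alpha
    where \<sigma>_def: "\<sigma> = ((A0, A1, phi), (B0, B1, psi), rho0, rho1, alpha)"
    by (cases \<sigma>) auto
  obtain a where z_def: "z = (A0, A1, a, phi)" using e by (cases z) (auto simp: \<sigma>_def p_obj_def)
  have a: "a \<in> Obj A0" using z by (simp add: z_def Ut_obj_iff)
  have U: "(B0, B1, psi) \<in> U_obj kappa" and rho0: "is_iso A0 B0 rho0"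
    using \<sigma> by (auto simp: \<sigma>_def U_arr_iff)
  have "gpd_groupoid B0" using U sgpd_groupoid unfolding U_obj_iff by blast
  then interpret B0: gpd_groupoid B0 .
  have "fo rho0 a \<in> Obj B0" using rho0 a by (simp add: is_iso_def is_functor_def)
  then show ?thesis
    using \<sigma> a
    by (auto simp: \<sigma>_def z_def p_lift_simp Ut_arr_iff U_arr_iff Ut_obj_iff hom_def p_arr_def
      p_obj_def)
qed

lemma p_lift_cmp:
  assumes \<sigma>: "\<sigma> \<in> U_arr kappa" and \<tau>: "\<tau> \<in> U_arr kappa" and z: "z \<in> Ut_obj kappa"
    and \<sigma>\<tau>: "fst (snd \<sigma>) = fst \<tau>" and e: "p_obj z = fst \<sigma>"
  shows "p_lift (U_cmp \<tau> \<sigma>) z = Ut_cmp (p_lift \<tau> (fst (snd (p_lift \<sigma> z)))) (p_lift \<sigma> z)"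
proof -
  obtain A0 A1 phi B0 B1 psi rho0 rho1 alpha
    where \<sigma>_def: "\<sigma> = ((A0, A1, phi), (B0, B1, psi), rho0, rho1, alpha)"
    by (cases \<sigma>) auto
  obtain C0 C1 chi rho0' rho1' alpha'
    where \<tau>_def: "\<tau> = ((B0, B1, psi), (C0, C1, chi), rho0', rho1', alpha')"
    using \<sigma>\<tau> by (cases \<tau>) (auto simp: \<sigma>_def)
  obtain a where z_def: "z = (A0, A1, a, phi)" using e by (cases z) (auto simp: \<sigma>_def p_obj_def)
  have a: "a \<in> Obj A0" using z by (simp add: z_def Ut_obj_iff)
  have rho0: "is_functor A0 B0 rho0" and rho0': "is_functor B0 C0 rho0'"
    using \<sigma> \<tau> by (auto simp: \<sigma>_def \<tau>_def U_arr_iff is_iso_def)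
  have "gpd_groupoid C0" using \<tau> sgpd_groupoid by (auto simp: \<tau>_def U_arr_iff U_obj_iff)
  then interpret C0: gpd_groupoid C0 .
  have "fo rho0' (fo rho0 a) \<in> Obj C0"
    and "fm rho0' (Ide B0 (fo rho0 a)) = Ide C0 (fo rho0' (fo rho0 a))"
    using rho0 rho0' a by (simp_all add: is_functor_def)
  then show ?thesis
    using a by (simp add: \<sigma>_def \<tau>_def z_def p_lift_simp U_cmp_def Ut_cmp_def fcomp_def)
qed

lemma p_split_cleavage:
  fixes kappa :: "'k rel"
  shows "split_cleavage (Ut kappa) (U kappa) p p_lift"
proof -
  have "p_lift (U_ide (p_obj z)) z = Ut_ide z" if "z \<in> Ut_obj kappa" for z
    using that by (cases z) (simp add: p_obj_def U_ide_def Ut_ide_def p_lift_simp fid_def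
      Ut_obj_iff)
  then show ?thesis
    unfolding split_cleavage_def Ut_simps U_simps p_simps using p_lift_lifts p_lift_cmp by blast
qed

lemma Obj_fiber_p:
  "t \<in> Obj (fiber (Ut kappa) (U kappa) p (A0, A1, phi)) \<Longrightarrow> \<exists>a\<in>Obj A0. t = (A0, A1, a, phi)"
  by (cases t) (auto simp: fiber_def p_obj_def Ut_obj_iff)

lemma hom_fiber_p:
  assumes m: "m \<in> hom (fiber (Ut kappa) (U kappa) p (A0, A1, phi)) (A0, A1, a, phi) (A0, A1, a', phi)"
    and a: "a \<in> Obj A0"
  shows "\<exists>tau\<in>hom A0 a a'.
    m = ((A0, A1, a, phi), (A0, A1, a', phi), fid A0, fid A1, tau, (\<lambda>y\<in>Obj A0. Ide A1 (fo phi y)))"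
proof -
  obtain r0 r1 tau al where m_def: "m = ((A0, A1, a, phi), (A0, A1, a', phi), r0, r1, tau, al)"
    using m by (cases m) (auto simp: fiber_def hom_def)
  have m_arr: "m \<in> Ut_arr kappa" and m_vertical: "p_arr m = U_ide (A0, A1, phi)"
    using m by (auto simp: fiber_def hom_def)
  have r: "r0 = fid A0" "r1 = fid A1" "al = (\<lambda>y\<in>Obj A0. Ide A1 (fo phi y))"
    using m_vertical by (simp_all add: m_def p_arr_def p_obj_def U_ide_def)
  then have "tau \<in> hom A0 a a'" using m_arr a by (simp add: m_def Ut_arr_iff fid_def)
  then show ?thesis using m_def r by blast
qed

lemma p_fiber_small:
  fixes kappa :: "'k rel"
  assumes u: "u \<in> U_obj kappa"
  shows "small kappa (fiber (Ut kappa) (U kappa) p u)" (is "small kappa ?P")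
proof -
  obtain A0 A1 phi where u_def: "u = (A0, A1, phi)" by (cases u) auto
  have A0: "small kappa A0" using u by (simp add: u_def U_obj_iff sgpd_def)
  define point :: "'k tobj \<Rightarrow> 'k" where "point t = fst (snd (snd t))" for t
  define path :: "'k tarr \<Rightarrow> 'k" where "path m = fst (snd (snd (snd (snd m))))" for m
  have obj: "t = (A0, A1, point t, phi) \<and> point t \<in> Obj A0" if "t \<in> Obj ?P" for t
    using Obj_fiber_p[OF that[unfolded u_def]] by (auto simp: point_def)
  have arr: "m = (t, t', fid A0, fid A1, path m, (\<lambda>y\<in>Obj A0. Ide A1 (fo phi y))) \<and>
             path m \<in> hom A0 (point t) (point t')"
    if t: "t \<in> Obj ?P" and t': "t' \<in> Obj ?P" and m: "m \<in> hom ?P t t'" for t t' m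
    using hom_fiber_p[of m kappa A0 A1 phi "point t" "point t'"] obj[OF t] obj[OF t'] m
    by (auto simp: u_def path_def)
  show ?thesis
  proof (rule small_if_embeds[OF A0])
    show "inj_on point (Obj ?P)"
    proof (rule inj_onI)
      fix t t' assume "t \<in> Obj ?P" "t' \<in> Obj ?P" "point t = point t'"
      then show "t = t'" using obj by metis
    qed
    show "point ` Obj ?P \<subseteq> Obj A0" using obj by blast
    fix t t' assume t: "t \<in> Obj ?P" and t': "t' \<in> Obj ?P"
    have "inj_on path (hom ?P t t')"
    proof (rule inj_onI)
      fix m m' assume "m \<in> hom ?P t t'" "m' \<in> hom ?P t t'" "path m = path m'"
      then show "m = m'" using arr[OF t t'] by metis
    qed
    then show "inj_on path (hom ?P t t') \<and> path ` hom ?P t t' \<subseteq> hom A0 (point t) (point t')"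
      using arr[OF t t'] by blast
  qed
qed

lemma gpdG_mor_pb_pairing:
  assumes "gpdG_mor A iA C iC f" and "gpdG_mor A iA X iX g"
    and "\<forall>a\<in>Obj A. fo h (fo f a) = fo q (fo g a)" and "\<forall>m\<in>Arr A. fm h (fm f m) = fm q (fm g m)"
  shows "gpdG_mor A iA (pb_gpd C X h q) (pb_inv iC iX) ((\<lambda>a. (fo f a, fo g a)), (\<lambda>m. (fm f m, fm g m)))"
  using assms unfolding gpdG_mor_def is_functor_def pb_inv_def hom_def by auto

locale gpdG_pullback = A: gpd_groupoid A + C: gpd_groupoid C
  for A :: "('ao, 'am) gpd" and C :: "('co, 'cm) gpd" +
  fixes iA :: "('ao, 'am, 'ao, 'am) fn" and iC :: "('co, 'cm, 'co, 'cm) fn"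
    and X :: "('xo, 'xm) gpd" and iX :: "('xo, 'xm, 'xo, 'xm) fn"
    and W :: "('wo, 'wm) gpd" and iW :: "('wo, 'wm, 'wo, 'wm) fn"
    and f :: "('ao, 'am, 'co, 'cm) fn" and g :: "('ao, 'am, 'xo, 'xm) fn"
    and h :: "('co, 'cm, 'wo, 'wm) fn" and q :: "('xo, 'xm, 'wo, 'wm) fn"
  assumes pullback: "is_pullback_square A iA C iC X iX W iW f g h q"
begin

sublocale f: gpd_functor A C f
  using pullback unfolding is_pullback_square_def gpdG_mor_def gpd_functor_def by blast
sublocale g: gpd_functor A X g
  using pullback unfolding is_pullback_square_def gpdG_mor_def gpd_functor_def by blast
sublocale h: gpd_functor C W h
  using pullback unfolding is_pullback_square_def gpdG_mor_def gpd_functor_def by blast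
sublocale q: gpd_functor X W q
  using pullback unfolding is_pullback_square_def gpdG_mor_def gpd_functor_def by blast

lemma commutes_obj: "a \<in> Obj A \<Longrightarrow> fo h (fo f a) = fo q (fo g a)"
  and commutes_arr: "m \<in> Arr A \<Longrightarrow> fm h (fm f m) = fm q (fm g m)"
  using pullback by (simp_all add: is_pullback_square_def)

lemma comparison_bij:
  "bij_betw (\<lambda>a. (fo f a, fo g a)) (Obj A) (Obj (pb_gpd C X h q))"
  "bij_betw (\<lambda>m. (fm f m, fm g m)) (Arr A) (Arr (pb_gpd C X h q))"
  using pullback by (simp_all add: is_pullback_square_def gpdG_iso_def)

lemma eq_if_same_images_obj:
  "a \<in> Obj A \<Longrightarrow> b \<in> Obj A \<Longrightarrow> fo f a = fo f b \<Longrightarrow> fo g a = fo g b \<Longrightarrow> a = b"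
  using comparison_bij(1) unfolding bij_betw_def inj_on_def by auto

lemma eq_if_same_images_arr:
  "m \<in> Arr A \<Longrightarrow> n \<in> Arr A \<Longrightarrow> fm f m = fm f n \<Longrightarrow> fm g m = fm g n \<Longrightarrow> m = n"
  using comparison_bij(2) unfolding bij_betw_def inj_on_def by auto

lemma ex_arr_with_images:
  assumes "\<sigma> \<in> Arr C" "\<xi> \<in> Arr X" "fm h \<sigma> = fm q \<xi>"
  shows "\<exists>m\<in>Arr A. fm f m = \<sigma> \<and> fm g m = \<xi>"
proof -
  have "(\<sigma>, \<xi>) \<in> (\<lambda>m. (fm f m, fm g m)) ` Arr A"
    using assms comparison_bij(2) unfolding bij_betw_def by simp
  then show ?thesis by force
qed

definition pullback_cleavage :: "('wm \<Rightarrow> 'xo \<Rightarrow> 'xm) \<Rightarrow> 'cm \<Rightarrow> 'ao \<Rightarrow> 'am" where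
  "pullback_cleavage c \<sigma> z = (SOME m. m \<in> Arr A \<and> fm f m = \<sigma> \<and> fm g m = c (fm h \<sigma>) (fo g z))"

lemma pullback_cleavage_lifts:
  assumes c: "split_cleavage X W q c"
    and \<sigma>: "\<sigma> \<in> Arr C" and z: "z \<in> Obj A" and e: "fo f z = Dom C \<sigma>"
  shows "pullback_cleavage c \<sigma> z \<in> Arr A \<and> fm f (pullback_cleavage c \<sigma> z) = \<sigma> \<and>
         fm g (pullback_cleavage c \<sigma> z) = c (fm h \<sigma>) (fo g z) \<and> Dom A (pullback_cleavage c \<sigma> z) = z"
proof -
  let ?c = "pullback_cleavage c"
  have "fo q (fo g z) = Dom W (fm h \<sigma>)" using e \<sigma> by (simp add: commutes_obj[OF z, symmetric])
  then have \<xi>: "c (fm h \<sigma>) (fo g z) \<in> Arr X" "Dom X (c (fm h \<sigma>) (fo g z)) = fo g z"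
    "fm q (c (fm h \<sigma>) (fo g z)) = fm h \<sigma>"
    using c \<sigma> z unfolding split_cleavage_def by auto
  have "\<exists>m. m \<in> Arr A \<and> fm f m = \<sigma> \<and> fm g m = c (fm h \<sigma>) (fo g z)"
    using ex_arr_with_images[OF \<sigma> \<xi>(1) \<xi>(3)[symmetric]] by blast
  then have m: "?c \<sigma> z \<in> Arr A \<and> fm f (?c \<sigma> z) = \<sigma> \<and> fm g (?c \<sigma> z) = c (fm h \<sigma>) (fo g z)"
    unfolding pullback_cleavage_def by (rule someI_ex)
  have "fo f (Dom A (?c \<sigma> z)) = fo f z" using m e f.map_dom[of "?c \<sigma> z"] by simp
  moreover have "fo g (Dom A (?c \<sigma> z)) = fo g z"
    using m \<xi>(2) g.map_dom[of "?c \<sigma> z"] by simp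
  ultimately have "Dom A (?c \<sigma> z) = z" using eq_if_same_images_obj m z by simp
  then show ?thesis using m by blast
qed

lemma split_cleavage_pullback:
  assumes c: "split_cleavage X W q c"
  shows "split_cleavage A C f (pullback_cleavage c)"
proof -
  let ?c = "pullback_cleavage c"
  note lift = pullback_cleavage_lifts[OF c]
  have ide: "?c (Ide C (fo f z)) z = Ide A z" if z: "z \<in> Obj A" for z
  proof -
    have "c (Ide W (fo q (fo g z))) (fo g z) = Ide X (fo g z)"
      using c z unfolding split_cleavage_def by simp
    then show ?thesis
      using lift[of "Ide C (fo f z)" z] z commutes_obj[OF z]
      by (intro eq_if_same_images_arr) auto
  qed
  have cmp: "?c (Cmp C \<tau> \<sigma>) z = Cmp A (?c \<tau> (Cod A (?c \<sigma> z))) (?c \<sigma> z)"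
    if \<sigma>: "\<sigma> \<in> Arr C" and \<tau>: "\<tau> \<in> Arr C" and z: "z \<in> Obj A"
      and \<sigma>\<tau>: "Cod C \<sigma> = Dom C \<tau>" and e: "fo f z = Dom C \<sigma>" for \<sigma> \<tau> z
  proof -
    define z' where "z' = Cod A (?c \<sigma> z)"
    note m1 = lift[OF \<sigma> z e]
    have z': "z' \<in> Obj A" "fo f z' = Dom C \<tau>"
      using m1 \<sigma>\<tau> f.map_cod[of "?c \<sigma> z"] by (auto simp: z'_def)
    note m2 = lift[OF \<tau> z']
    note m12 = lift[of "Cmp C \<tau> \<sigma>" z]
    have "fo q (fo g z) = Dom W (fm h \<sigma>)" using e \<sigma> by (simp add: commutes_obj[OF z, symmetric])
    moreover have "fo g z' = Cod X (c (fm h \<sigma>) (fo g z))"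
      using m1 g.map_cod[of "?c \<sigma> z"] by (simp add: z'_def)
    ultimately have "c (fm h (Cmp C \<tau> \<sigma>)) (fo g z)
        = Cmp X (c (fm h \<tau>) (fo g z')) (c (fm h \<sigma>) (fo g z))"
      using c \<sigma> \<tau> \<sigma>\<tau> z unfolding split_cleavage_def by simp
    then show ?thesis
      using m1 m2 m12 \<sigma> \<tau> \<sigma>\<tau> z e by (intro eq_if_same_images_arr) (auto simp: z'_def)
  qed
  show ?thesis
    unfolding split_cleavage_def using lift ide cmp by blast
qed

lemma small_fiber_pullback:
  assumes x: "x \<in> Obj C" and small: "small kappa (fiber X W q (fo h x))"
  shows "small kappa (fiber A C f x)"
proof (rule small_if_embeds[OF small])
  show "inj_on (fo g) (Obj (fiber A C f x))"
    using eq_if_same_images_obj by (auto simp: fiber_def inj_on_def)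
  show "fo g ` Obj (fiber A C f x) \<subseteq> Obj (fiber X W q (fo h x))"
    using commutes_obj by (auto simp: fiber_def)
  fix a b assume "a \<in> Obj (fiber A C f x)" "b \<in> Obj (fiber A C f x)"
  have "fm g m \<in> hom (fiber X W q (fo h x)) (fo g a) (fo g b)"
    if "m \<in> hom (fiber A C f x) a b" for m
    using that commutes_arr[of m] x by (auto simp: fiber_def hom_def)
  moreover have "inj_on (fm g) (hom (fiber A C f x) a b)"
    using eq_if_same_images_arr by (auto simp: fiber_def hom_def inj_on_def)
  ultimately show "inj_on (fm g) (hom (fiber A C f x) a b) \<and>
      fm g ` hom (fiber A C f x) a b \<subseteq> hom (fiber X W q (fo h x)) (fo g a) (fo g b)"
    by blast
qed

end

lemma small_split_fibration_if_pullback_of_p: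
  fixes kappa :: "'k rel" and A :: "('ao, 'am) gpd" and C :: "('co, 'cm) gpd"
    and f :: "('ao, 'am, 'co, 'cm) fn"
  assumes "groupoid A" "groupoid C" "is_pullback_of_p kappa A iA C iC f"
  shows "split_fibration A C f \<and> (\<forall>x\<in>Obj C. small kappa (fiber A C f x))"
proof -
  obtain g :: "('ao, 'am, 'k tobj, 'k tarr) fn" and h :: "('co, 'cm, 'k uobj, 'k uarr) fn"
    where "is_pullback_square A iA C iC (Ut kappa) Ut_inv (U kappa) U_inv f g h p"
    using assms(3) unfolding is_pullback_of_p_def by blast
  then interpret gpdG_pullback A C iA iC "Ut kappa" Ut_inv "U kappa" U_inv f g h p
    using assms(1,2) by (simp add: gpdG_pullback_def gpd_groupoid_def gpdG_pullback_axioms_def)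
  have "split_cleavage A C f (pullback_cleavage p_lift)"
    using split_cleavage_pullback p_split_cleavage by blast
  moreover have "small kappa (fiber A C f x)" if x: "x \<in> Obj C" for x
  proof -
    have "fo h x \<in> U_obj kappa" using h.map_obj[OF x] by simp
    then show ?thesis using small_fiber_pullback[OF x p_fiber_small] by blast
  qed
  ultimately show ?thesis
    unfolding split_fibration_def isofibration_def split_cleavage_def by blast
qed

lemma Ball_image_iff:
  "(\<forall>y\<in>e ` S. P y) \<longleftrightarrow> (\<forall>x\<in>S. P (e x))"
  by auto

locale small_split_fibration =
  fixes kappa :: "'k rel"
    and A :: "('ao, 'am) gpd" and iA :: "('ao, 'am, 'ao, 'am) fn"
    and C :: "('co, 'cm) gpd" and iC :: "('co, 'cm, 'co, 'cm) fn"
    and f :: "('ao, 'am, 'co, 'cm) fn"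
    and c :: "'cm \<Rightarrow> 'ao \<Rightarrow> 'am"
  assumes kappa_card_order: "card_order kappa" and kappa_infinite: "natLeq <o kappa"
    and A_gpdG: "gpdG A iA" and C_gpdG: "gpdG C iC" and f_gpdG_mor: "gpdG_mor A iA C iC f"
    and cleavage: "split_cleavage A C f c"
    and small_fibers: "\<forall>x\<in>Obj C. small kappa (fiber A C f x)"
begin

sublocale A: gpd_groupoid A using A_gpdG by (simp add: gpdG_def gpd_groupoid_def)
sublocale C: gpd_groupoid C using C_gpdG by (simp add: gpdG_def gpd_groupoid_def)
sublocale f: gpd_functor A C f using f_gpdG_mor by (simp add: gpdG_mor_def gpd_functor_def)
sublocale iA: gpd_functor A A iA using A_gpdG by (simp add: gpdG_def gpd_functor_def)
sublocale iC: gpd_functor C C iC using C_gpdG by (simp add: gpdG_def gpd_functor_def)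

lemma f_ginv[simp]: "m \<in> Arr A \<Longrightarrow> fm f (ginv A m) = ginv C (fm f m)"
  and iA_ginv[simp]: "m \<in> Arr A \<Longrightarrow> fm iA (ginv A m) = ginv A (fm iA m)"
  using f.map_ginv iA.map_ginv A.gpd_groupoid_axioms C.gpd_groupoid_axioms by blast+

lemma iA_iA_obj[simp]: "z \<in> Obj A \<Longrightarrow> fo iA (fo iA z) = z"
  and iA_iA_arr[simp]: "m \<in> Arr A \<Longrightarrow> fm iA (fm iA m) = m"
  and iC_iC_obj[simp]: "x \<in> Obj C \<Longrightarrow> fo iC (fo iC x) = x"
  and iC_iC_arr[simp]: "s \<in> Arr C \<Longrightarrow> fm iC (fm iC s) = s"
  using A_gpdG C_gpdG by (simp_all add: gpdG_def)

lemma f_iA_obj[simp]: "z \<in> Obj A \<Longrightarrow> fo f (fo iA z) = fo iC (fo f z)"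
  using f_gpdG_mor by (simp add: gpdG_mor_def)
lemma f_iA_arr[simp]: "m \<in> Arr A \<Longrightarrow> fm f (fm iA m) = fm iC (fm f m)"
  using f_gpdG_mor by (simp add: gpdG_mor_def)

lemma cleavage_arr[simp]:
  "s \<in> Arr C \<Longrightarrow> z \<in> Obj A \<Longrightarrow> fo f z = Dom C s \<Longrightarrow> c s z \<in> Arr A"
  and cleavage_dom[simp]: "s \<in> Arr C \<Longrightarrow> z \<in> Obj A \<Longrightarrow> fo f z = Dom C s \<Longrightarrow> Dom A (c s z) = z"
  and cleavage_map[simp]: "s \<in> Arr C \<Longrightarrow> z \<in> Obj A \<Longrightarrow> fo f z = Dom C s \<Longrightarrow> fm f (c s z) = s"
  using cleavage unfolding split_cleavage_def by blast+

lemma cleavage_cod_map[simp]: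
  "s \<in> Arr C \<Longrightarrow> z \<in> Obj A \<Longrightarrow> fo f z = Dom C s \<Longrightarrow> fo f (Cod A (c s z)) = Cod C s"
  using f.map_cod[of "c s z"] by simp

lemma cleavage_ide[simp]:
  "z \<in> Obj A \<Longrightarrow> x = fo f z \<Longrightarrow> c (Ide C x) z = Ide A z"
  using cleavage unfolding split_cleavage_def by blast

lemma cleavage_cmp:
  "s \<in> Arr C \<Longrightarrow> t \<in> Arr C \<Longrightarrow> z \<in> Obj A \<Longrightarrow> Cod C s = Dom C t \<Longrightarrow> fo f z = Dom C s \<Longrightarrow>
        c (Cmp C t s) z = Cmp A (c t (Cod A (c s z))) (c s z)"
  using cleavage unfolding split_cleavage_def by blast

definition fib_obj :: "'co \<Rightarrow> 'ao set" where "fib_obj x = {z \<in> Obj A. fo f z = x}"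

text \<open>The guard x \<in> Obj C keeps the junk arrow Ide C x out of fib_arr x when x is not an object.\<close>
definition fib_arr :: "'co \<Rightarrow> 'am set" where
  "fib_arr x = {m \<in> Arr A. fm f m = Ide C x \<and> x \<in> Obj C}"

lemma fib_obj_iff: "z \<in> fib_obj x \<longleftrightarrow> z \<in> Obj A \<and> fo f z = x"
  by (simp add: fib_obj_def)
lemma fib_arr_iff:
  "m \<in> fib_arr x \<longleftrightarrow> m \<in> Arr A \<and> fm f m = Ide C x \<and> x \<in> Obj C"
  by (simp add: fib_arr_def)

lemma fib_arr_dom[simp]: "m \<in> fib_arr x \<Longrightarrow> Dom A m \<in> fib_obj x"
  using f.map_dom[of m] by (auto simp: fib_obj_iff fib_arr_iff)
lemma fib_arr_cod[simp]: "m \<in> fib_arr x \<Longrightarrow> Cod A m \<in> fib_obj x"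
  using f.map_cod[of m] by (auto simp: fib_obj_iff fib_arr_iff)
lemma fib_arr_in_Arr: "m \<in> fib_arr x \<Longrightarrow> m \<in> Arr A" by (simp add: fib_arr_iff)
lemma fib_obj_in_Obj: "z \<in> fib_obj x \<Longrightarrow> z \<in> Obj A" by (simp add: fib_obj_iff)
lemma fib_obj_base: "z \<in> fib_obj x \<Longrightarrow> x \<in> Obj C" by (auto simp: fib_obj_iff)
lemma fib_arr_map: "m \<in> fib_arr x \<Longrightarrow> fm f m = Ide C x" by (simp add: fib_arr_iff)
lemma fib_arr_ide[simp]: "z \<in> fib_obj x \<Longrightarrow> Ide A z \<in> fib_arr x"
  by (auto simp: fib_obj_iff fib_arr_iff)
lemma fib_arr_cmp[simp]:
  "m \<in> fib_arr x \<Longrightarrow> n \<in> fib_arr x \<Longrightarrow> Cod A m = Dom A n \<Longrightarrow> Cmp A n m \<in> fib_arr x"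
  by (auto simp: fib_arr_iff)
lemma fib_arr_ginv[simp]: "m \<in> fib_arr x \<Longrightarrow> ginv A m \<in> fib_arr x"
  by (auto simp: fib_arr_iff)
lemma fib_obj_iA[simp]: "z \<in> fib_obj x \<Longrightarrow> fo iA z \<in> fib_obj (fo iC x)"
  by (auto simp: fib_obj_iff)
lemma fib_arr_iA[simp]: "m \<in> fib_arr x \<Longrightarrow> fm iA m \<in> fib_arr (fo iC x)"
  by (auto simp: fib_arr_iff)

lemma Obj_fiber: "Obj (fiber A C f x) = fib_obj x" by (simp add: fiber_def fib_obj_def)
lemma Arr_fiber: "x \<in> Obj C \<Longrightarrow> Arr (fiber A C f x) = fib_arr x"
  by (simp add: fiber_def fib_arr_def)

lemma fib_obj_small: "|fib_obj x| <o kappa"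
proof (cases "x \<in> Obj C")
  case True then show ?thesis using small_fibers Obj_fiber unfolding small_def by metis
next
  case False then have "fib_obj x = {}" by (auto simp: fib_obj_iff)
  then show ?thesis using ordLeq_ordLess_trans[OF card_of_empty1[of natLeq] kappa_infinite] natLeq_Card_order
    by simp
qed

lemma ex_inj_fib_obj: "\<exists>e::'ao \<Rightarrow> 'k. inj_on e (fib_obj x)"
  using ex_inj_on_into_card[OF kappa_card_order kappa_infinite fib_obj_small] .

lemma ex_inj_fib_arr: "\<exists>e::'am \<Rightarrow> 'k. inj_on e (fib_arr x)"
proof (cases "x \<in> Obj C")
  case False then have "fib_arr x = {}" by (auto simp: fib_arr_iff)
  then show ?thesis by simp
next
  case True
  have s: "small kappa (fiber A C f x)" using small_fibers True by blast
  have sub: "fib_arr x \<subseteq> (\<Union>i\<in>fib_obj x \<times> fib_obj x. hom (fiber A C f x) (fst i) (snd i))"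
  proof
    fix m assume m: "m \<in> fib_arr x"
    then have "(Dom A m, Cod A m) \<in> fib_obj x \<times> fib_obj x"
      "m \<in> hom (fiber A C f x) (Dom A m) (Cod A m)"
      using True by (simp, simp add: hom_def fiber_def fib_arr_def)
    then show "m \<in> (\<Union>i\<in>fib_obj x \<times> fib_obj x. hom (fiber A C f x) (fst i) (snd i))"
      by force
  qed
  have "|fib_obj x \<times> fib_obj x| \<le>o kappa"
    using card_of_Times_ordLeq_infinite_card[OF kappa_card_order kappa_infinite fib_obj_small fib_obj_small] .
  moreover have "\<forall>i\<in>fib_obj x \<times> fib_obj x. |hom (fiber A C f x) (fst i) (snd i)| <o kappa"
    using s unfolding small_def Obj_fiber by auto
  ultimately obtain e :: "'am \<Rightarrow> 'k" where
    "inj_on e (\<Union>i\<in>fib_obj x \<times> fib_obj x. hom (fiber A C f x) (fst i) (snd i))"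
    using ex_inj_on_UNION_into_card[OF kappa_card_order kappa_infinite, of "fib_obj x \<times> fib_obj x"
      "\<lambda>i. hom (fiber A C f x) (fst i) (snd i)"]
      by blast
  then show ?thesis using inj_on_subset[OF _ sub] by blast
qed

definition enc_obj :: "'co \<Rightarrow> 'ao \<Rightarrow> 'k" where
  "enc_obj x = (SOME e. inj_on e (fib_obj x))"
definition enc_arr :: "'co \<Rightarrow> 'am \<Rightarrow> 'k" where
  "enc_arr x = (SOME e. inj_on e (fib_arr x))"
definition dec_obj :: "'co \<Rightarrow> 'k \<Rightarrow> 'ao" where
  "dec_obj x = the_inv_into (fib_obj x) (enc_obj x)"
definition dec_arr :: "'co \<Rightarrow> 'k \<Rightarrow> 'am" where
  "dec_arr x = the_inv_into (fib_arr x) (enc_arr x)"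

lemma inj_enc_obj: "inj_on (enc_obj x) (fib_obj x)" unfolding enc_obj_def
  using ex_inj_fib_obj by (rule someI_ex)
lemma inj_enc_arr: "inj_on (enc_arr x) (fib_arr x)" unfolding enc_arr_def
  using ex_inj_fib_arr by (rule someI_ex)

lemma dec_enc_obj[simp]: "z \<in> fib_obj x \<Longrightarrow> dec_obj x (enc_obj x z) = z"
  unfolding dec_obj_def using inj_enc_obj the_inv_into_f_f by fast
lemma dec_enc_arr[simp]: "m \<in> fib_arr x \<Longrightarrow> dec_arr x (enc_arr x m) = m"
  unfolding dec_arr_def using inj_enc_arr the_inv_into_f_f by fast
lemma enc_obj_eq_iff[simp]:
  "z \<in> fib_obj x \<Longrightarrow> z' \<in> fib_obj x \<Longrightarrow> enc_obj x z = enc_obj x z' \<longleftrightarrow> z = z'"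
  using inj_enc_obj unfolding inj_on_def by blast
lemma enc_arr_eq_iff[simp]:
  "m \<in> fib_arr x \<Longrightarrow> m' \<in> fib_arr x \<Longrightarrow> enc_arr x m = enc_arr x m' \<longleftrightarrow> m = m'"
  using inj_enc_arr unfolding inj_on_def by blast

text \<open>The fiber over x, re-encoded in the type 'k so that it is an object of U.\<close>
definition Fib :: "'co \<Rightarrow> 'k G" where
 "Fib x = \<lparr>Obj = enc_obj x ` fib_obj x, Arr = enc_arr x ` fib_arr x,
   Dom = (\<lambda>k\<in>enc_arr x ` fib_arr x. enc_obj x (Dom A (dec_arr x k))),
   Cod = (\<lambda>k\<in>enc_arr x ` fib_arr x. enc_obj x (Cod A (dec_arr x k))),
   Ide = (\<lambda>k\<in>enc_obj x ` fib_obj x. enc_arr x (Ide A (dec_obj x k))),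
   Cmp = (\<lambda>k l. if l \<in> enc_arr x ` fib_arr x \<and> k \<in> enc_arr x ` fib_arr x \<and>
                     enc_obj x (Cod A (dec_arr x l)) = enc_obj x (Dom A (dec_arr x k))
                then enc_arr x (Cmp A (dec_arr x k) (dec_arr x l)) else undefined)\<rparr>"

lemma Obj_Fib: "Obj (Fib x) = enc_obj x ` fib_obj x" by (simp add: Fib_def)
lemma Arr_Fib: "Arr (Fib x) = enc_arr x ` fib_arr x" by (simp add: Fib_def)
lemma enc_obj_in_Fib[simp]: "z \<in> fib_obj x \<Longrightarrow> enc_obj x z \<in> Obj (Fib x)"
  by (simp add: Fib_def)
lemma enc_arr_in_Fib[simp]: "m \<in> fib_arr x \<Longrightarrow> enc_arr x m \<in> Arr (Fib x)"
  by (simp add: Fib_def)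
lemma Dom_Fib[simp]:
  "m \<in> fib_arr x \<Longrightarrow> Dom (Fib x) (enc_arr x m) = enc_obj x (Dom A m)"
  by (simp add: Fib_def)
lemma Cod_Fib[simp]:
  "m \<in> fib_arr x \<Longrightarrow> Cod (Fib x) (enc_arr x m) = enc_obj x (Cod A m)"
  by (simp add: Fib_def)
lemma Ide_Fib[simp]:
  "z \<in> fib_obj x \<Longrightarrow> Ide (Fib x) (enc_obj x z) = enc_arr x (Ide A z)"
  by (simp add: Fib_def)
lemma Cmp_Fib[simp]:
  "m \<in> fib_arr x \<Longrightarrow> n \<in> fib_arr x \<Longrightarrow> Cod A m = Dom A n \<Longrightarrow>
   Cmp (Fib x) (enc_arr x n) (enc_arr x m) = enc_arr x (Cmp A n m)"
  by (simp add: Fib_def)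

lemma groupoid_Fib: "groupoid (Fib x)"
proof -
  have "\<exists>k\<in>hom (Fib x) (Cod (Fib x) (enc_arr x m)) (Dom (Fib x) (enc_arr x m)).
          Cmp (Fib x) k (enc_arr x m) = Ide (Fib x) (Dom (Fib x) (enc_arr x m)) \<and>
          Cmp (Fib x) (enc_arr x m) k = Ide (Fib x) (Cod (Fib x) (enc_arr x m))"
    if m: "m \<in> fib_arr x" for m
    using m fib_arr_in_Arr[OF m] by (intro bexI[of _ "enc_arr x (ginv A m)"]) (auto simp: hom_def)
  then show ?thesis
    unfolding groupoid_def Obj_Fib Arr_Fib Ball_image_iff
    by (auto simp: hom_def fib_arr_in_Arr fib_obj_in_Obj)
qed

lemma canonical_Fib: "canonical (Fib x)"
  unfolding canonical_def by (auto simp: Fib_def)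

lemma gpd_groupoid_Fib: "gpd_groupoid (Fib x)" using groupoid_Fib by (simp add: gpd_groupoid_def)

lemma ginv_Fib[simp]:
  "m \<in> fib_arr x \<Longrightarrow> ginv (Fib x) (enc_arr x m) = enc_arr x (ginv A m)"
  using gpd_groupoid.ginv_eqI[OF gpd_groupoid_Fib[of x], of "enc_arr x m"
    "enc_arr x (ginv A m)"] fib_arr_in_Arr[of m x]
    by simp

lemma small_Fib: "small kappa (Fib x)"
  unfolding small_def
proof (intro conjI ballI)
  show "|Obj (Fib x)| <o kappa" unfolding Obj_Fib
    using ordLeq_ordLess_trans[OF card_of_image fib_obj_small] .
next
  fix k k' assume k: "k \<in> Obj (Fib x)" and k': "k' \<in> Obj (Fib x)"
  obtain z z' where z: "z \<in> fib_obj x" "k = enc_obj x z" and z': "z' \<in> fib_obj x"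
    "k' = enc_obj x z'"
    using k k' by (auto simp: Obj_Fib)
  have x: "x \<in> Obj C" using z fib_obj_base by blast
  have "hom (Fib x) k k' \<subseteq> enc_arr x ` hom (fiber A C f x) z z'"
  proof
    fix n assume n: "n \<in> hom (Fib x) k k'"
    then obtain m where m: "m \<in> fib_arr x" "n = enc_arr x m" by (auto simp: hom_def Arr_Fib)
    have "Dom A m = z" "Cod A m = z'" using n m z z' by (auto simp: hom_def)
    then show "n \<in> enc_arr x ` hom (fiber A C f x) z z'"
      using m x fib_arr_in_Arr[OF m(1)] fib_arr_map[OF m(1)]
        by (auto simp: hom_def Arr_fiber fiber_def)
  qed
  then have "|hom (Fib x) k k'| \<le>o |hom (fiber A C f x) z z'|"
    using card_of_mono1 card_of_image ordLeq_transitive by blast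
  moreover have "|hom (fiber A C f x) z z'| <o kappa"
    using small_fibers x z z' unfolding small_def Obj_fiber by blast
  ultimately show "|hom (Fib x) k k'| <o kappa" using ordLeq_ordLess_trans by blast
qed

lemma sgpd_Fib: "sgpd kappa (Fib x)" by (simp add: sgpd_def groupoid_Fib canonical_Fib small_Fib)

definition Fib_functor :: "'co \<Rightarrow> 'co \<Rightarrow> ('ao \<Rightarrow> 'ao) \<Rightarrow> ('am \<Rightarrow> 'am) \<Rightarrow> 'k F" where
  "Fib_functor x y T1 T2 = ((\<lambda>k\<in>enc_obj x ` fib_obj x. enc_obj y (T1 (dec_obj x k))), (\<lambda>k\<in>enc_arr x ` fib_arr x. enc_arr y (T2 (dec_arr x k))))"

lemma Fib_functor_obj[simp]:
  "z \<in> fib_obj x \<Longrightarrow> fo (Fib_functor x y T1 T2) (enc_obj x z) = enc_obj y (T1 z)"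
  by (simp add: Fib_functor_def)
lemma Fib_functor_arr[simp]:
  "m \<in> fib_arr x \<Longrightarrow> fm (Fib_functor x y T1 T2) (enc_arr x m) = enc_arr y (T2 m)"
  by (simp add: Fib_functor_def)
lemma ext_fn_Fib_functor: "ext_fn (Fib x) (Fib_functor x y T1 T2)"
  by (simp add: Fib_functor_def ext_fn_def Obj_Fib Arr_Fib)

definition fiberwise_functor :: "'co \<Rightarrow> 'co \<Rightarrow> ('ao \<Rightarrow> 'ao) \<Rightarrow> ('am \<Rightarrow> 'am) \<Rightarrow> bool" where
  "fiberwise_functor x y T1 T2 \<longleftrightarrow> (\<forall>z\<in>fib_obj x. T1 z \<in> fib_obj y) \<and>
     (\<forall>m\<in>fib_arr x. T2 m \<in> fib_arr y \<and> Dom A (T2 m) = T1 (Dom A m) \<and> Cod A (T2 m) = T1 (Cod A m)) \<and>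
     (\<forall>z\<in>fib_obj x. T2 (Ide A z) = Ide A (T1 z)) \<and>
     (\<forall>m\<in>fib_arr x. \<forall>n\<in>fib_arr x. Cod A m = Dom A n \<longrightarrow> T2 (Cmp A n m) = Cmp A (T2 n) (T2 m))"

lemma is_functor_Fib_functor:
  assumes "fiberwise_functor x y T1 T2"
  shows "is_functor (Fib x) (Fib y) (Fib_functor x y T1 T2)"
  using assms unfolding is_functor_def fiberwise_functor_def Obj_Fib Arr_Fib Ball_image_iff hom_def
  by (auto simp: fib_arr_in_Arr)

lemma is_iso_Fib_functor:
  assumes "fiberwise_functor x y T1 T2" "bij_betw T1 (fib_obj x) (fib_obj y)"
    "bij_betw T2 (fib_arr x) (fib_arr y)"
  shows "is_iso (Fib x) (Fib y) (Fib_functor x y T1 T2)"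
proof -
  have "bij_betw (fo (Fib_functor x y T1 T2)) (Obj (Fib x)) (Obj (Fib y))"
  proof -
    have "bij_betw (enc_obj y \<circ> T1 \<circ> dec_obj x) (enc_obj x ` fib_obj x) (enc_obj y ` fib_obj y)"
    proof (rule bij_betw_trans[OF _ bij_betw_trans[OF assms(2)]])
      show "bij_betw (dec_obj x) (enc_obj x ` fib_obj x) (fib_obj x)" unfolding dec_obj_def
        using inj_enc_obj
        by (rule bij_betw_the_inv_into[OF inj_on_imp_bij_betw])
      show "bij_betw (enc_obj y) (fib_obj y) (enc_obj y ` fib_obj y)"
        using inj_enc_obj by (rule inj_on_imp_bij_betw)
    qed
    then show ?thesis unfolding Obj_Fib
      by (rule bij_betw_cong[THEN iffD1, rotated]) (auto simp: Fib_functor_def)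
  qed
  moreover have "bij_betw (fm (Fib_functor x y T1 T2)) (Arr (Fib x)) (Arr (Fib y))"
  proof -
    have "bij_betw (enc_arr y \<circ> T2 \<circ> dec_arr x) (enc_arr x ` fib_arr x) (enc_arr y ` fib_arr y)"
    proof (rule bij_betw_trans[OF _ bij_betw_trans[OF assms(3)]])
      show "bij_betw (dec_arr x) (enc_arr x ` fib_arr x) (fib_arr x)" unfolding dec_arr_def
        using inj_enc_arr
        by (rule bij_betw_the_inv_into[OF inj_on_imp_bij_betw])
      show "bij_betw (enc_arr y) (fib_arr y) (enc_arr y ` fib_arr y)"
        using inj_enc_arr by (rule inj_on_imp_bij_betw)
    qed
    then show ?thesis unfolding Arr_Fib
      by (rule bij_betw_cong[THEN iffD1, rotated]) (auto simp: Fib_functor_def)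
  qed
  ultimately show ?thesis using is_functor_Fib_functor[OF assms(1)] by (simp add: is_iso_def)
qed

lemma fcomp_Fib_functor:
  assumes "\<forall>z\<in>fib_obj x. T1 z \<in> fib_obj y" "\<forall>m\<in>fib_arr x. T2 m \<in> fib_arr y"
  shows "fcomp (Fib x) (Fib_functor y w S1 S2) (Fib_functor x y T1 T2)
      = Fib_functor x w (S1 \<circ> T1) (S2 \<circ> T2)"
  using assms by (auto simp: fcomp_def Fib_functor_def Obj_Fib Arr_Fib intro!: ext)

lemma fid_Fib: "fid (Fib x) = Fib_functor x x id id"
  by (auto simp: fid_def Fib_functor_def Obj_Fib Arr_Fib intro!: ext)

lemma Fib_functor_cong:
  "(\<And>z. z \<in> fib_obj x \<Longrightarrow> T1 z = T1' z) \<Longrightarrow> (\<And>m. m \<in> fib_arr x \<Longrightarrow> T2 m = T2' m) \<Longrightarrow>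
   Fib_functor x y T1 T2 = Fib_functor x y T1' T2'"
  by (auto simp: Fib_functor_def intro!: ext)

lemma finv_Fib_functor:
  assumes T1: "\<forall>z\<in>fib_obj x. T1 z \<in> fib_obj y" and T2: "\<forall>m\<in>fib_arr x. T2 m \<in> fib_arr y"
    and S1: "\<forall>z\<in>fib_obj y. S1 z \<in> fib_obj x" and S2: "\<forall>m\<in>fib_arr y. S2 m \<in> fib_arr x"
    and i1: "\<forall>z\<in>fib_obj x. S1 (T1 z) = z" and i2: "\<forall>m\<in>fib_arr x. S2 (T2 m) = m"
    and j1: "\<forall>z\<in>fib_obj y. T1 (S1 z) = z" and j2: "\<forall>m\<in>fib_arr y. T2 (S2 m) = m"
  shows "finv (Fib x) (Fib y) (Fib_functor x y T1 T2) = Fib_functor y x S1 S2"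
proof -
  have io: "inj_on (fo (Fib_functor x y T1 T2)) (Obj (Fib x))"
    unfolding Obj_Fib inj_on_def using T1 i1 by (auto simp: Ball_image_iff) (metis)
  have im: "inj_on (fm (Fib_functor x y T1 T2)) (Arr (Fib x))"
    unfolding Arr_Fib inj_on_def using T2 i2 by (auto simp: Ball_image_iff) (metis)
  have o: "the_inv_into (Obj (Fib x)) (fo (Fib_functor x y T1 T2)) (enc_obj y w) = enc_obj x (S1 w)"
    if w: "w \<in> fib_obj y" for w
    by (rule the_inv_into_f_eq[OF io]) (use w S1 j1 in auto)
  have m: "the_inv_into (Arr (Fib x)) (fm (Fib_functor x y T1 T2)) (enc_arr y n) = enc_arr x (S2 n)"
    if n: "n \<in> fib_arr y" for n
    by (rule the_inv_into_f_eq[OF im]) (use n S2 j2 in auto)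
  show ?thesis unfolding finv_def
    using o m by (auto simp: Fib_functor_def Obj_Fib Arr_Fib intro!: ext)
qed

lemma nat_iso_Fib_functor:
  assumes F1: "fiberwise_functor x w T1 T2" and F2: "fiberwise_functor x w S1 S2"
    and b: "\<forall>z\<in>fib_obj x. b z \<in> fib_arr w \<and> Dom A (b z) = T1 z \<and> Cod A (b z) = S1 z"
    and nat: "\<forall>m\<in>fib_arr x. Cmp A (S2 m) (b (Dom A m)) = Cmp A (b (Cod A m)) (T2 m)"
  shows "nat_iso (Fib x) (Fib w) (Fib_functor x w T1 T2) (Fib_functor x w S1 S2) (\<lambda>k\<in>Obj (Fib x). enc_arr w (b (dec_obj x k)))"
  unfolding nat_iso_def Obj_Fib Arr_Fib Ball_image_iff hom_def
proof (intro conjI ballI)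
  fix z assume z: "z \<in> fib_obj x"
  then show "(\<lambda>k\<in>enc_obj x ` fib_obj x. enc_arr w (b (dec_obj x k))) (enc_obj x z)
         \<in> {m \<in> enc_arr w ` fib_arr w. Dom (Fib w) m = fo (Fib_functor x w T1 T2) (enc_obj x z) \<and>
           Cod (Fib w) m = fo (Fib_functor x w S1 S2) (enc_obj x z)}"
    using b by auto
next
  fix m assume m: "m \<in> fib_arr x"
  have a: "Dom A m \<in> fib_obj x" "Cod A m \<in> fib_obj x" using m by auto
  show "Cmp (Fib w) (fm (Fib_functor x w S1 S2) (enc_arr x m)) ((\<lambda>k\<in>enc_obj x ` fib_obj x. enc_arr w (b (dec_obj x k))) (Dom (Fib x) (enc_arr x m))) =
         Cmp (Fib w) ((\<lambda>k\<in>enc_obj x ` fib_obj x. enc_arr w (b (dec_obj x k))) (Cod (Fib x) (enc_arr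
           x m))) (fm (Fib_functor x w T1 T2) (enc_arr x m))"
    using m a b nat F1 F2 unfolding fiberwise_functor_def by auto
qed

lemma fib_objD:
  "z \<in> fib_obj x \<Longrightarrow> z \<in> Obj A \<and> fo f z = x \<and> x \<in> Obj C"
  using fib_obj_base by (auto simp: fib_obj_iff)
lemma fib_arrD:
  "m \<in> fib_arr x \<Longrightarrow> m \<in> Arr A \<and> fm f m = Ide C x \<and> x \<in> Obj C \<and> fo f (Dom A m) = x \<and>
      fo f (Cod A m) = x
   \<and> Dom A m \<in> fib_obj x \<and> Cod A m \<in> fib_obj x"
  using fib_arr_dom[of m x] fib_arr_cod[of m x] by (auto simp: fib_arr_iff fib_obj_iff)

definition transport_obj :: "'cm \<Rightarrow> 'ao \<Rightarrow> 'ao" where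
  "transport_obj s z = Cod A (c s z)"
definition transport_arr :: "'cm \<Rightarrow> 'am \<Rightarrow> 'am" where
  "transport_arr s m = Cmp A (c s (Cod A m)) (Cmp A m (ginv A (c s (Dom A m))))"

lemma transport_obj_fib:
  assumes s: "s \<in> Arr C" and z: "z \<in> fib_obj (Dom C s)"
  shows "transport_obj s z \<in> fib_obj (Cod C s)"
  using fib_objD[OF z] s by (simp add: transport_obj_def fib_obj_iff)

lemma transport_arr_fib: assumes s: "s \<in> Arr C" and m: "m \<in> fib_arr (Dom C s)"
  shows "transport_arr s m \<in> fib_arr (Cod C s) \<and>
      Dom A (transport_arr s m) = transport_obj s (Dom A m) \<and> Cod A (transport_arr s m) =
        transport_obj s (Cod A m)"
proof -
  note M = fib_arrD[OF m]
  have "transport_arr s m \<in> Arr A" "Dom A (transport_arr s m) = transport_obj s (Dom A m)"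
    "Cod A (transport_arr s m) = transport_obj s (Cod A m)"
    using M s by (simp_all add: transport_arr_def transport_obj_def)
  moreover have "fm f (transport_arr s m) = Ide C (Cod C s)" using M s
    by (simp add: transport_arr_def)
  ultimately show ?thesis using s by (simp add: fib_arr_iff)
qed

lemma fiberwise_functor_transport:
  assumes s: "s \<in> Arr C"
  shows "fiberwise_functor (Dom C s) (Cod C s) (transport_obj s) (transport_arr s)"
proof -
  have "transport_arr s (Ide A z) = Ide A (transport_obj s z)" if "z \<in> fib_obj (Dom C s)" for z
    using fib_objD[OF that] s by (simp add: transport_arr_def transport_obj_def)
  moreover have "transport_arr s (Cmp A n m) = Cmp A (transport_arr s n) (transport_arr s m)"
    if "m \<in> fib_arr (Dom C s)" "n \<in> fib_arr (Dom C s)" "Cod A m = Dom A n" for m n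
    using fib_arrD[OF that(1)] fib_arrD[OF that(2)] that(3) s by (simp add: transport_arr_def)
  ultimately show ?thesis
    unfolding fiberwise_functor_def using transport_obj_fib[OF s] transport_arr_fib[OF s] by blast
qed

lemma transport_obj_ide: "z \<in> fib_obj x \<Longrightarrow> transport_obj (Ide C x) z = z"
  using fib_objD[of z x] by (simp add: transport_obj_def)
lemma transport_arr_ide: "m \<in> fib_arr x \<Longrightarrow> transport_arr (Ide C x) m = m"
  using fib_arrD[of m x] by (simp add: transport_arr_def)

lemma transport_obj_cmp:
  assumes s: "s \<in> Arr C" and t: "t \<in> Arr C" and e: "Cod C s = Dom C t"
    and z: "z \<in> fib_obj (Dom C s)"
  shows "transport_obj (Cmp C t s) z = transport_obj t (transport_obj s z)"
  using fib_objD[OF z] s t e cleavage_cmp[of s t z] by (simp add: transport_obj_def)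

lemma transport_arr_cmp:
  assumes s: "s \<in> Arr C" and t: "t \<in> Arr C" and e: "Cod C s = Dom C t"
    and m: "m \<in> fib_arr (Dom C s)"
  shows "transport_arr (Cmp C t s) m = transport_arr t (transport_arr s m)"
proof -
  note M = fib_arrD[OF m]
  have 1: "c (Cmp C t s) (Cod A m) = Cmp A (c t (transport_obj s (Cod A m))) (c s (Cod A m))"
    using cleavage_cmp[of s t "Cod A m"] M s t e by (simp add: transport_obj_def)
  have 2: "c (Cmp C t s) (Dom A m) = Cmp A (c t (transport_obj s (Dom A m))) (c s (Dom A m))"
    using cleavage_cmp[of s t "Dom A m"] M s t e by (simp add: transport_obj_def)
  have d: "Dom A (transport_arr s m) = transport_obj s (Dom A m)"
    "Cod A (transport_arr s m) = transport_obj s (Cod A m)" "transport_arr s m \<in> Arr A"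
    using transport_arr_fib[OF s m] fib_arrD by auto
  show ?thesis
    unfolding transport_arr_def[of "Cmp C t s"] 1 2 unfolding transport_arr_def[of t] d
    using M s t e by (simp add: transport_arr_def transport_obj_def A.ginv_cmp)
qed

lemma fiberwise_functor_comp:
  assumes "fiberwise_functor x y T1 T2" "fiberwise_functor y w S1 S2"
  shows "fiberwise_functor x w (S1 \<circ> T1) (S2 \<circ> T2)"
proof -
  have a: "\<forall>m\<in>fib_arr x. T2 m \<in> fib_arr y" "\<forall>z\<in>fib_obj x. T1 z \<in> fib_obj y"
    using assms(1) unfolding fiberwise_functor_def by auto
  show ?thesis using assms(1,2) a unfolding fiberwise_functor_def
    by (auto simp: fib_arr_dom fib_arr_cod)
qed

lemma transport_bij: assumes s: "s \<in> Arr C"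
  shows "bij_betw (transport_obj s) (fib_obj (Dom C s)) (fib_obj (Cod C s)) \<and>
      bij_betw (transport_arr s) (fib_arr (Dom C s)) (fib_arr (Cod C s))"
proof -
  let ?t = "ginv C s"
  have t: "?t \<in> Arr C" "Dom C ?t = Cod C s" "Cod C ?t = Dom C s" using s by auto
  have l: "Cmp C ?t s = Ide C (Dom C s)" and r: "Cmp C s ?t = Ide C (Cod C s)" using s by auto
  have o1: "\<forall>z\<in>fib_obj (Dom C s). transport_obj ?t (transport_obj s z) = z"
    using transport_obj_cmp[OF s t(1)] l transport_obj_ide t by (metis C.ginv_dom)
  have o2: "\<forall>z\<in>fib_obj (Cod C s). transport_obj s (transport_obj ?t z) = z"
    using transport_obj_cmp[OF t(1) s] r transport_obj_ide t by metis
  have m1: "\<forall>m\<in>fib_arr (Dom C s). transport_arr ?t (transport_arr s m) = m"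
    using transport_arr_cmp[OF s t(1)] l transport_arr_ide t by (metis C.ginv_dom)
  have m2: "\<forall>m\<in>fib_arr (Cod C s). transport_arr s (transport_arr ?t m) = m"
    using transport_arr_cmp[OF t(1) s] r transport_arr_ide t by metis
  have i1: "transport_obj s ` fib_obj (Dom C s) \<subseteq> fib_obj (Cod C s)"
    "transport_obj ?t ` fib_obj (Cod C s) \<subseteq> fib_obj (Dom C s)"
    using transport_obj_fib[OF s] transport_obj_fib[OF t(1)] t by auto
  have i2: "transport_arr s ` fib_arr (Dom C s) \<subseteq> fib_arr (Cod C s)"
    "transport_arr ?t ` fib_arr (Cod C s) \<subseteq> fib_arr (Dom C s)"
    using transport_arr_fib[OF s] transport_arr_fib[OF t(1)] t by auto
  show ?thesis using bij_betw_byWitness[OF o1 o2 i1] bij_betw_byWitness[OF m1 m2 i2] by blast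
qed

definition transport :: "'cm \<Rightarrow> 'k F" where
  "transport s = Fib_functor (Dom C s) (Cod C s) (transport_obj s) (transport_arr s)"

lemma is_iso_transport:
  "s \<in> Arr C \<Longrightarrow> is_iso (Fib (Dom C s)) (Fib (Cod C s)) (transport s)"
  unfolding transport_def using is_iso_Fib_functor fiberwise_functor_transport transport_bij
    by blast
lemma ext_fn_transport: "ext_fn (Fib (Dom C s)) (transport s)" unfolding transport_def
  by (rule ext_fn_Fib_functor)

definition Fib_inv :: "'co \<Rightarrow> 'k F" where
  "Fib_inv x = Fib_functor x (fo iC x) (fo iA) (fm iA)"

lemma fiberwise_functor_inv:
  assumes x: "x \<in> Obj C"
  shows "fiberwise_functor x (fo iC x) (fo iA) (fm iA)"
  unfolding fiberwise_functor_def
proof (intro conjI)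
  show "\<forall>z\<in>fib_obj x. fo iA z \<in> fib_obj (fo iC x)" by simp
  show "\<forall>m\<in>fib_arr x. fm iA m \<in> fib_arr (fo iC x) \<and> Dom A (fm iA m) = fo iA (Dom A m) \<and>
      Cod A (fm iA m) = fo iA (Cod A m)"
    using fib_arr_in_Arr by simp
  show "\<forall>z\<in>fib_obj x. fm iA (Ide A z) = Ide A (fo iA z)" using fib_obj_in_Obj by simp
  show "\<forall>m\<in>fib_arr x. \<forall>n\<in>fib_arr x. Cod A m = Dom A n \<longrightarrow> fm iA (Cmp A n m)
      = Cmp A (fm iA n) (fm iA m)"
    using fib_arr_in_Arr by simp
qed

lemma iA_fib_bij: assumes x: "x \<in> Obj C"
  shows "bij_betw (fo iA) (fib_obj x) (fib_obj (fo iC x)) \<and>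
      bij_betw (fm iA) (fib_arr x) (fib_arr (fo iC x))"
proof -
  have "\<forall>z\<in>fib_obj x. fo iA (fo iA z) = z" "\<forall>z\<in>fib_obj (fo iC x). fo iA (fo iA z) = z"
    using fib_obj_in_Obj by auto
  moreover have "fo iA ` fib_obj x \<subseteq> fib_obj (fo iC x)" "fo iA ` fib_obj (fo iC x) \<subseteq> fib_obj x"
    using fib_obj_iA[of _ "fo iC x"] x by auto
  moreover have "\<forall>m\<in>fib_arr x. fm iA (fm iA m) = m" "\<forall>m\<in>fib_arr (fo iC x). fm iA (fm iA m) = m"
    using fib_arr_in_Arr by auto
  moreover have "fm iA ` fib_arr x \<subseteq> fib_arr (fo iC x)" "fm iA ` fib_arr (fo iC x) \<subseteq> fib_arr x"
    using fib_arr_iA[of _ "fo iC x"] x by auto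
  ultimately show ?thesis using bij_betw_byWitness by metis
qed

lemma is_iso_Fib_inv: "x \<in> Obj C \<Longrightarrow> is_iso (Fib x) (Fib (fo iC x)) (Fib_inv x)"
  unfolding Fib_inv_def using is_iso_Fib_functor fiberwise_functor_inv iA_fib_bij by blast
lemma ext_fn_Fib_inv:
  "ext_fn (Fib x) (Fib_inv x)" unfolding Fib_inv_def by (rule ext_fn_Fib_functor)

lemma Fib_inv_iC:
  "x \<in> Obj C \<Longrightarrow> Fib_inv (fo iC x) = Fib_functor (fo iC x) x (fo iA) (fm iA)"
  by (simp add: Fib_inv_def)

lemma finv_Fib_inv:
  assumes x: "x \<in> Obj C"
  shows "finv (Fib x) (Fib (fo iC x)) (Fib_inv x) = Fib_inv (fo iC x)"
  unfolding Fib_inv_iC[OF x] unfolding Fib_inv_def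
  by (rule finv_Fib_functor) (use x fib_obj_iA[of _ "fo iC x"] fib_arr_iA[of _ "fo iC x"]
    fib_obj_in_Obj fib_arr_in_Arr in auto)

definition cls_obj :: "'co \<Rightarrow> 'k uobj" where
  "cls_obj x = (Fib x, Fib (fo iC x), Fib_inv x)"

lemma cls_obj_U: "x \<in> Obj C \<Longrightarrow> cls_obj x \<in> U_obj kappa"
  by (simp add: cls_obj_def U_obj_iff sgpd_Fib is_iso_Fib_inv ext_fn_Fib_inv)

text \<open>The failure of the cleavage to commute with the involutions; these arrows are the
  components of the natural isomorphism alpha in the image of s under the classifying map.\<close>
definition inv_defect :: "'cm \<Rightarrow> 'ao \<Rightarrow> 'am" where
  "inv_defect s z = Cmp A (c (fm iC s) (fo iA z)) (ginv A (fm iA (c s z)))"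

lemma inv_defect_fib: assumes s: "s \<in> Arr C" and z: "z \<in> fib_obj (Dom C s)"
  shows "inv_defect s z \<in> fib_arr (fo iC (Cod C s)) \<and>
      Dom A (inv_defect s z) = fo iA (transport_obj s z) \<and> Cod A (inv_defect s z) = transport_obj
        (fm iC s) (fo iA z)"
proof -
  note Z = fib_objD[OF z]
  have "inv_defect s z \<in> Arr A" "Dom A (inv_defect s z) = fo iA (transport_obj s z)"
    "Cod A (inv_defect s z) = transport_obj (fm iC s) (fo iA z)"
    "fm f (inv_defect s z) = Ide C (fo iC (Cod C s))"
    using Z s by (simp_all add: inv_defect_def transport_obj_def)
  then show ?thesis using s by (simp add: fib_arr_iff)
qed

lemma inv_defect_natural: assumes s: "s \<in> Arr C" and m: "m \<in> fib_arr (Dom C s)"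
  shows "Cmp A (transport_arr (fm iC s) (fm iA m)) (inv_defect s (Dom A m))
      = Cmp A (inv_defect s (Cod A m)) (fm iA (transport_arr s m))"
  using fib_arrD[OF m] s by (simp add: inv_defect_def transport_arr_def)

definition twist :: "'cm \<Rightarrow> 'k \<Rightarrow> 'k" where
  "twist s = (\<lambda>k\<in>Obj (Fib (Dom C s)). enc_arr (fo iC (Cod C s)) (inv_defect s (dec_obj (Dom C s) k)))"

lemma twist_extensional: "twist s \<in> extensional (Obj (Fib (Dom C s)))" by (simp add: twist_def)

lemma twist_nat_iso: assumes s: "s \<in> Arr C"
  shows "nat_iso (Fib (Dom C s)) (Fib (fo iC (Cod C s))) (fcomp (Fib (Dom C s)) (Fib_inv (Cod C s)) (transport s))
            (fcomp (Fib (Dom C s)) (transport (fm iC s)) (Fib_inv (Dom C s))) (twist s)"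
proof -
  let ?x = "Dom C s" and ?y = "Cod C s"
  have x: "?x \<in> Obj C" "?y \<in> Obj C" using s by auto
  have e1: "fcomp (Fib ?x) (Fib_inv ?y) (transport s)
      = Fib_functor ?x (fo iC ?y) (fo iA \<circ> transport_obj s) (fm iA \<circ> transport_arr s)"
    unfolding Fib_inv_def transport_def
      by (rule fcomp_Fib_functor) (use transport_obj_fib[OF s] transport_arr_fib[OF s] in auto)
  have e2: "fcomp (Fib ?x) (transport (fm iC s)) (Fib_inv ?x)
      = Fib_functor ?x (fo iC ?y) (transport_obj (fm iC s) \<circ> fo iA) (transport_arr (fm iC s) \<circ> fm
        iA)"
    unfolding Fib_inv_def transport_def using s by (simp add: fcomp_Fib_functor)
  have f1: "fiberwise_functor ?x (fo iC ?y) (fo iA \<circ> transport_obj s) (fm iA \<circ> transport_arr s)"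
    using fiberwise_functor_comp[OF fiberwise_functor_transport[OF s] fiberwise_functor_inv[OF
      x(2)]] .
  have f2: "fiberwise_functor ?x (fo iC ?y) (transport_obj (fm iC s) \<circ> fo iA) (transport_arr (fm iC s) \<circ> fm iA)"
  proof -
    have "fiberwise_functor (fo iC ?x) (fo iC ?y) (transport_obj (fm iC s)) (transport_arr (fm iC s))"
      using fiberwise_functor_transport[of "fm iC s"] s by simp
    then show ?thesis using fiberwise_functor_comp[OF fiberwise_functor_inv[OF x(1)]] by blast
  qed
  show ?thesis unfolding e1 e2 twist_def
    by (rule nat_iso_Fib_functor[OF f1 f2]) (use inv_defect_fib[OF s] inv_defect_natural[OF s] in
      auto)
qed

definition cls_arr :: "'cm \<Rightarrow> 'k uarr" where
  "cls_arr s = (cls_obj (Dom C s), cls_obj (Cod C s), transport s, transport (fm iC s), twist s)"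

lemma cls_arr_U: assumes s: "s \<in> Arr C" shows "cls_arr s \<in> U_arr kappa"
proof -
  have isr: "is_iso (Fib (fo iC (Dom C s))) (Fib (fo iC (Cod C s))) (transport (fm iC s))"
    "ext_fn (Fib (fo iC (Dom C s))) (transport (fm iC s))"
    using is_iso_transport[of "fm iC s"] ext_fn_transport[of "fm iC s"] s by simp_all
  show ?thesis using s isr twist_nat_iso[OF s] twist_extensional[of s] is_iso_transport[OF s]
    ext_fn_transport[of s] cls_obj_U[of "Dom C s"] cls_obj_U[of "Cod C s"]
    by (simp add: cls_arr_def cls_obj_def U_arr_iff)
qed

lemma inv_defect_cmp:
  assumes s: "s \<in> Arr C" and t: "t \<in> Arr C" and e: "Cod C s = Dom C t"
    and w: "w \<in> fib_obj (Dom C s)"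
  shows "inv_defect (Cmp C t s) w
      = Cmp A (transport_arr (fm iC t) (inv_defect s w)) (inv_defect t (transport_obj s w))"
proof -
  note W = fib_objD[OF w]
  have b: "inv_defect s w \<in> Arr A" "Dom A (inv_defect s w) = fo iA (transport_obj s w)"
    "Cod A (inv_defect s w) = transport_obj (fm iC s) (fo iA w)"
    using inv_defect_fib[OF s w] fib_arr_in_Arr by auto
  have c1: "c (Cmp C (fm iC t) (fm iC s)) (fo iA w)
      = Cmp A (c (fm iC t) (transport_obj (fm iC s) (fo iA w))) (c (fm iC s) (fo iA w))"
    using cleavage_cmp[of "fm iC s" "fm iC t" "fo iA w"] W s t e by (simp add: transport_obj_def)
  have c2: "c (Cmp C t s) w = Cmp A (c t (transport_obj s w)) (c s w)"
    using cleavage_cmp[of s t w] W s t e by (simp add: transport_obj_def)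
  show ?thesis
    unfolding inv_defect_def[of "Cmp C t s"] c2 using s t e W c1 b
    unfolding transport_arr_def by (simp add: inv_defect_def transport_obj_def A.ginv_cmp)
qed

lemma inv_defect_iC: assumes s: "s \<in> Arr C" and u: "u \<in> fib_obj (fo iC (Dom C s))"
  shows "inv_defect (fm iC s) u = fm iA (ginv A (inv_defect s (fo iA u)))"
proof -
  have u': "fo iA u \<in> fib_obj (Dom C s)" using fib_obj_iA[OF u] s by simp
  note U = fib_objD[OF u] and U' = fib_objD[OF u']
  show ?thesis using s U U' by (simp add: inv_defect_def A.ginv_cmp)
qed

lemma transport_ide: assumes x: "x \<in> Obj C" shows "transport (Ide C x) = fid (Fib x)"
proof -
  have "transport (Ide C x) = Fib_functor x x (transport_obj (Ide C x)) (transport_arr (Ide C x))"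
    using x by (simp add: transport_def)
  also have "\<dots> = Fib_functor x x id id"
    by (rule Fib_functor_cong) (simp_all add: transport_obj_ide transport_arr_ide)
  finally show ?thesis by (simp add: fid_Fib)
qed

lemma transport_cmp: assumes s: "s \<in> Arr C" and t: "t \<in> Arr C" and e: "Cod C s = Dom C t"
  shows "transport (Cmp C t s) = fcomp (Fib (Dom C s)) (transport t) (transport s)"
proof -
  have "fcomp (Fib (Dom C s)) (transport t) (transport s)
      = Fib_functor (Dom C s) (Cod C t) (transport_obj t \<circ> transport_obj s) (transport_arr t \<circ>
        transport_arr s)"
    unfolding transport_def e[symmetric]
      by (rule fcomp_Fib_functor) (use transport_obj_fib[OF s] transport_arr_fib[OF s] in auto)
  also have "\<dots> = Fib_functor (Dom C s) (Cod C t) (transport_obj (Cmp C t s)) (transport_arr (Cmp C t s))"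
    by (rule Fib_functor_cong) (use transport_obj_cmp[OF s t e] transport_arr_cmp[OF s t e] in auto)
  finally have "fcomp (Fib (Dom C s)) (transport t) (transport s)
      = Fib_functor (Dom C s) (Cod C t) (transport_obj (Cmp C t s)) (transport_arr (Cmp C t s))" .
  moreover have "transport (Cmp C t s)
      = Fib_functor (Dom C s) (Cod C t) (transport_obj (Cmp C t s)) (transport_arr (Cmp C t s))"
    unfolding transport_def using s t e by simp
  ultimately show ?thesis by simp
qed

definition cls :: "('co, 'cm, 'k uobj, 'k uarr) fn" where "cls = (cls_obj, cls_arr)"

lemma cls_arr_ide: assumes x: "x \<in> Obj C" shows "cls_arr (Ide C x) = U_ide (cls_obj x)"
proof -
  have "twist (Ide C x) = (\<lambda>k\<in>Obj (Fib x). Ide (Fib (fo iC x)) (fo (Fib_inv x) k))"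
  proof (rule ext)
    fix k show "twist (Ide C x) k = (\<lambda>k\<in>Obj (Fib x). Ide (Fib (fo iC x)) (fo (Fib_inv x) k)) k"
    proof (cases "k \<in> Obj (Fib x)")
      case True then obtain z where z: "z \<in> fib_obj x" "k = enc_obj x z" by (auto simp: Obj_Fib)
      note Z = fib_objD[OF z(1)]
      have "inv_defect (Ide C x) z = Ide A (fo iA z)" using Z by (simp add: inv_defect_def)
      then show ?thesis using z x Z by (simp add: twist_def Fib_inv_def)
    next
      case False then show ?thesis using x by (simp add: twist_def)
    qed
  qed
  then show ?thesis using x by (simp add: cls_arr_def U_ide_def cls_obj_def transport_ide)
qed

lemma cls_arr_cmp: assumes s: "s \<in> Arr C" and t: "t \<in> Arr C" and e: "Cod C s = Dom C t"
  shows "cls_arr (Cmp C t s) = U_cmp (cls_arr t) (cls_arr s)"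
proof -
  let ?x = "Dom C s" and ?y = "Cod C s" and ?z = "Cod C t"
  have ri: "transport (fm iC (Cmp C t s))
      = fcomp (Fib (fo iC ?x)) (transport (fm iC t)) (transport (fm iC s))"
    using transport_cmp[of "fm iC s" "fm iC t"] s t e by simp
  have twist: "twist (Cmp C t s)
      = (\<lambda>k\<in>Obj (Fib ?x). Cmp (Fib (fo iC ?z)) (fm (transport (fm iC t)) (twist s k)) (twist t (fo
        (transport s) k)))"
  proof (rule ext)
    fix k show "twist (Cmp C t s) k
        = (\<lambda>k\<in>Obj (Fib ?x). Cmp (Fib (fo iC ?z)) (fm (transport (fm iC t)) (twist s k)) (twist t (fo
          (transport s) k))) k"
    proof (cases "k \<in> Obj (Fib ?x)")
      case True then obtain w where w: "w \<in> fib_obj ?x" "k = enc_obj ?x w" by (auto simp: Obj_Fib)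
      have bs: "inv_defect s w \<in> fib_arr (fo iC ?y)"
        "Dom A (inv_defect s w) = fo iA (transport_obj s w)"
        using inv_defect_fib[OF s w(1)] by auto
      have tw: "transport_obj s w \<in> fib_obj (Dom C t)" using transport_obj_fib[OF s w(1)] e by simp
      have bt: "inv_defect t (transport_obj s w) \<in> fib_arr (fo iC ?z)"
        "Cod A (inv_defect t (transport_obj s w))
            = transport_obj (fm iC t) (fo iA (transport_obj s w))"
        using inv_defect_fib[OF t tw] by auto
      have tm: "transport_arr (fm iC t) (inv_defect s w) \<in> fib_arr (fo iC ?z)"
        "Dom A (transport_arr (fm iC t) (inv_defect s w))
            = transport_obj (fm iC t) (fo iA (transport_obj s w))"
        using transport_arr_fib[of "fm iC t" "inv_defect s w"] t bs e by simp_all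
      show ?thesis using True w s t e bs bt tw tm
        by (simp add: twist_def transport_def inv_defect_cmp[OF s t e w(1)])
    next
      case False then show ?thesis using s t e by (simp add: twist_def)
    qed
  qed
  show ?thesis using s t e ri twist by (simp add: cls_arr_def U_cmp_def cls_obj_def transport_cmp)
qed

lemma cls_obj_iC: "x \<in> Obj C \<Longrightarrow> cls_obj (fo iC x) = U_inv_obj (cls_obj x)"
  by (simp add: cls_obj_def U_inv_obj_def finv_Fib_inv)

lemma cls_arr_iC: assumes s: "s \<in> Arr C" shows "cls_arr (fm iC s) = U_inv_arr (cls_arr s)"
proof -
  let ?x = "Dom C s" and ?y = "Cod C s"
  have x: "?x \<in> Obj C" "?y \<in> Obj C" using s by auto
  have twist: "twist (fm iC s)
      = (\<lambda>v\<in>Obj (Fib (fo iC ?x)). fm (Fib_inv (fo iC ?y)) (ginv (Fib (fo iC ?y)) (twist s (fo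
        (Fib_inv (fo iC ?x)) v))))"
  proof (rule ext)
    fix v show "twist (fm iC s) v
        = (\<lambda>v\<in>Obj (Fib (fo iC ?x)). fm (Fib_inv (fo iC ?y)) (ginv (Fib (fo iC ?y)) (twist s (fo
          (Fib_inv (fo iC ?x)) v)))) v"
    proof (cases "v \<in> Obj (Fib (fo iC ?x))")
      case True then obtain u where u: "u \<in> fib_obj (fo iC ?x)" "v = enc_obj (fo iC ?x) u"
        by (auto simp: Obj_Fib)
      have u': "fo iA u \<in> fib_obj ?x" using fib_obj_iA[OF u(1)] x by simp
      have b: "inv_defect s (fo iA u) \<in> fib_arr (fo iC ?y)" using inv_defect_fib[OF s u'] by auto
      have b': "ginv A (inv_defect s (fo iA u)) \<in> fib_arr (fo iC ?y)" using b by simp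
      have b'': "fm iA (ginv A (inv_defect s (fo iA u))) \<in> fib_arr ?y" using fib_arr_iA[OF b'] x
        by simp
      show ?thesis using True u u' b b' b'' s x
        by (simp add: twist_def Fib_inv_iC inv_defect_iC[OF s u(1)])
    next
      case False then show ?thesis using s by (simp add: twist_def)
    qed
  qed
  show ?thesis using s x twist
    by (simp add: cls_arr_def U_inv_arr_def cls_obj_def U_inv_obj_def finv_Fib_inv)
qed

lemma gpdG_mor_cls: "gpdG_mor C iC (U kappa) U_inv cls"
  unfolding gpdG_mor_def is_functor_def cls_def U_inv_def fst_conv snd_conv U_simps
proof (intro conjI ballI impI)
  fix x assume "x \<in> Obj C" then show "cls_obj x \<in> U_obj kappa" by (rule cls_obj_U)
next
  fix s assume s: "s \<in> Arr C"
  then show "cls_arr s \<in> hom (U kappa) (cls_obj (Dom C s)) (cls_obj (Cod C s))"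
    using cls_arr_U[OF s] by (simp add: hom_def cls_arr_def)
next
  fix x assume "x \<in> Obj C" then show "cls_arr (Ide C x) = U_ide (cls_obj x)" by (rule cls_arr_ide)
next
  fix s t assume "s \<in> Arr C" "t \<in> Arr C" "Cod C s = Dom C t"
  then show "cls_arr (Cmp C t s) = U_cmp (cls_arr t) (cls_arr s)" by (rule cls_arr_cmp)
next
  fix x assume "x \<in> Obj C" then show "cls_obj (fo iC x) = U_inv_obj (cls_obj x)"
    by (rule cls_obj_iC)
next
  fix s assume "s \<in> Arr C" then show "cls_arr (fm iC s) = U_inv_arr (cls_arr s)"
    by (rule cls_arr_iC)
qed

definition tcls_obj :: "'ao \<Rightarrow> 'k tobj" where
  "tcls_obj z = (Fib (fo f z), Fib (fo iC (fo f z)), enc_obj (fo f z) z, Fib_inv (fo f z))"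

text \<open>Every arrow m factors as its vertical part after the lift c (f m) (Dom m); the vertical
  part is the point component of the image of m in U-tilde.\<close>
definition vertical_part :: "'am \<Rightarrow> 'am" where
  "vertical_part m = Cmp A m (ginv A (c (fm f m) (Dom A m)))"

definition vertical_code :: "'am \<Rightarrow> 'k" where
  "vertical_code m = enc_arr (Cod C (fm f m)) (vertical_part m)"

definition tcls_arr :: "'am \<Rightarrow> 'k tarr" where
  "tcls_arr m = (tcls_obj (Dom A m), tcls_obj (Cod A m), transport (fm f m), transport (fm iC (fm f m)), vertical_code m, twist (fm f m))"

definition tcls :: "('ao, 'am, 'k tobj, 'k tarr) fn" where "tcls = (tcls_obj, tcls_arr)"

lemma Fib_inv_enc_obj[simp]:
  "z \<in> Obj A \<Longrightarrow> fo (Fib_inv (fo f z)) (enc_obj (fo f z) z) = enc_obj (fo iC (fo f z)) (fo iA z)"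
  by (simp add: Fib_inv_def fib_obj_iff)

lemma tcls_obj_Ut: "z \<in> Obj A \<Longrightarrow> tcls_obj z \<in> Ut_obj kappa"
  using cls_obj_U[of "fo f z"] by (simp add: tcls_obj_def Ut_obj_iff cls_obj_def fib_obj_iff)

lemma vertical_part_fib: assumes m: "m \<in> Arr A"
  shows "vertical_part m \<in> fib_arr (fo f (Cod A m)) \<and>
      Dom A (vertical_part m) = transport_obj (fm f m) (Dom A m) \<and> Cod A (vertical_part m) = Cod A
        m"
proof -
  have "vertical_part m \<in> Arr A" "Dom A (vertical_part m) = transport_obj (fm f m) (Dom A m)"
    "Cod A (vertical_part m) = Cod A m"
     "fm f (vertical_part m) = Ide C (fo f (Cod A m))"
    using m by (simp_all add: vertical_part_def transport_obj_def)
  then show ?thesis using m by (simp add: fib_arr_iff)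
qed

lemma transport_enc_obj:
  "s \<in> Arr C \<Longrightarrow> z \<in> fib_obj (Dom C s) \<Longrightarrow>
      fo (transport s) (enc_obj (Dom C s) z) = enc_obj (Cod C s) (transport_obj s z)"
  by (simp add: transport_def)
lemma transport_enc_arr:
  "s \<in> Arr C \<Longrightarrow> m \<in> fib_arr (Dom C s) \<Longrightarrow>
      fm (transport s) (enc_arr (Dom C s) m) = enc_arr (Cod C s) (transport_arr s m)"
  by (simp add: transport_def)

lemma tcls_arr_Ut: assumes m: "m \<in> Arr A" shows "tcls_arr m \<in> Ut_arr kappa"
proof -
  let ?s = "fm f m"
  have s: "?s \<in> Arr C" using m by simp
  have hU: "cls_arr ?s \<in> U_arr kappa" using cls_arr_U[OF s] .
  have dz: "Dom A m \<in> fib_obj (Dom C ?s)" using m by (simp add: fib_obj_iff)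
  have tau: "vertical_code m \<in> hom (Fib (Cod C ?s)) (fo (transport ?s) (enc_obj (Dom C ?s) (Dom A m))) (enc_obj (Cod C ?s) (Cod A m))"
    using vertical_part_fib[OF m] transport_enc_obj[OF s dz] m
      by (simp add: vertical_code_def hom_def)
  show ?thesis using hU m tcls_obj_Ut[of "Dom A m"] tcls_obj_Ut[of "Cod A m"] tau
    by (simp add: tcls_arr_def tcls_obj_def cls_arr_def cls_obj_def U_arr_iff Ut_arr_iff Ut_obj_iff)
qed

lemma twist_ide:
  "x \<in> Obj C \<Longrightarrow> twist (Ide C x) = (\<lambda>k\<in>Obj (Fib x). Ide (Fib (fo iC x)) (fo (Fib_inv x) k))"
  using cls_arr_ide[of x] by (simp add: cls_arr_def U_ide_def cls_obj_def)

lemma twist_cmp: assumes s: "s \<in> Arr C" and t: "t \<in> Arr C" and e: "Cod C s = Dom C t"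
  shows "twist (Cmp C t s) = (\<lambda>k\<in>Obj (Fib (Dom C s)). Cmp (Fib (fo iC (Cod C t))) (fm (transport (fm iC t)) (twist s k)) (twist t (fo (transport s) k)))"
  using cls_arr_cmp[OF s t e] s t e by (simp add: cls_arr_def U_cmp_def cls_obj_def)

lemma transport_iC_cmp: assumes s: "s \<in> Arr C" and t: "t \<in> Arr C" and e: "Cod C s = Dom C t"
  shows "transport (Cmp C (fm iC t) (fm iC s))
      = fcomp (Fib (fo iC (Dom C s))) (transport (fm iC t)) (transport (fm iC s))"
  using cls_arr_cmp[OF s t e] s t e by (simp add: cls_arr_def U_cmp_def cls_obj_def)

lemma twist_iC: assumes s: "s \<in> Arr C"
  shows "twist (fm iC s) = (\<lambda>v\<in>Obj (Fib (fo iC (Dom C s))). fm (finv (Fib (Cod C s)) (Fib (fo iC (Cod C s))) (Fib_inv (Cod C s)))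
      (ginv (Fib (fo iC (Cod C s))) (twist s (fo (finv (Fib (Dom C s)) (Fib (fo iC (Dom C s)))
        (Fib_inv (Dom C s))) v))))"
  using cls_arr_iC[OF s] s by (simp add: cls_arr_def U_inv_arr_def cls_obj_def U_inv_obj_def)

lemma tcls_arr_ide: assumes z: "z \<in> Obj A" shows "tcls_arr (Ide A z) = Ut_ide (tcls_obj z)"
proof -
  have x: "fo f z \<in> Obj C" using z by simp
  have "vertical_code (Ide A z) = Ide (Fib (fo f z)) (enc_obj (fo f z) z)"
    using z by (simp add: vertical_code_def vertical_part_def fib_obj_iff)
  then show ?thesis using z x
    by (simp add: tcls_arr_def Ut_ide_def tcls_obj_def transport_ide twist_ide)
qed

lemma tcls_arr_cmp: assumes m: "m \<in> Arr A" and n: "n \<in> Arr A" and e: "Cod A m = Dom A n"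
  shows "tcls_arr (Cmp A n m) = Ut_cmp (tcls_arr n) (tcls_arr m)"
proof -
  let ?s = "fm f m" and ?t = "fm f n"
  have s: "?s \<in> Arr C" and t: "?t \<in> Arr C" and e': "Cod C ?s = Dom C ?t" using m n e by auto
  have dz: "Dom A m \<in> fib_obj (Dom C ?s)" using m by (simp add: fib_obj_iff)
  have vert_m: "vertical_part m \<in> fib_arr (Dom C ?t)"
    "Dom A (vertical_part m) = transport_obj ?s (Dom A m)" "Cod A (vertical_part m) = Cod A m"
    using vertical_part_fib[OF m] e e' m by auto
  have vert_n: "vertical_part n \<in> fib_arr (Cod C ?t)"
    "Dom A (vertical_part n) = transport_obj ?t (Dom A n)" "Cod A (vertical_part n) = Cod A n"
    using vertical_part_fib[OF n] n by auto
  have tm: "transport_arr ?t (vertical_part m) \<in> fib_arr (Cod C ?t)"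
    "Cod A (transport_arr ?t (vertical_part m)) = transport_obj ?t (Cod A m)"
    using transport_arr_fib[OF t vert_m(1)] vert_m by auto
  have key: "vertical_part (Cmp A n m)
      = Cmp A (vertical_part n) (transport_arr ?t (vertical_part m))"
  proof -
    have c: "c (Cmp C ?t ?s) (Dom A m) = Cmp A (c ?t (Cod A (c ?s (Dom A m)))) (c ?s (Dom A m))"
      using cleavage_cmp[of ?s ?t "Dom A m"] s t e' m by simp
    show ?thesis using m n e c vert_m(2) unfolding vertical_part_def transport_arr_def
      transport_obj_def
      by (simp add: A.ginv_cmp)
  qed
  have tau: "vertical_code (Cmp A n m)
      = Cmp (Fib (Cod C ?t)) (vertical_code n) (fm (transport ?t) (vertical_code m))"
    using key vert_m vert_n tm transport_enc_arr[OF t vert_m(1)] m n e e'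
      by (simp add: vertical_code_def transport_obj_def)
  show ?thesis using m n e s t e' tau
    by (simp add: tcls_arr_def Ut_cmp_def tcls_obj_def transport_cmp twist_cmp transport_iC_cmp)
qed

lemma tcls_obj_iA: "z \<in> Obj A \<Longrightarrow> tcls_obj (fo iA z) = Ut_inv_obj (tcls_obj z)"
  by (simp add: tcls_obj_def Ut_inv_obj_def finv_Fib_inv)

lemma tcls_arr_iA: assumes m: "m \<in> Arr A" shows "tcls_arr (fm iA m) = Ut_inv_arr (tcls_arr m)"
proof -
  let ?s = "fm f m" and ?x = "fo f (Dom A m)" and ?y = "fo f (Cod A m)"
  have s: "?s \<in> Arr C" using m by simp
  have x: "?x \<in> Obj C" "?y \<in> Obj C" using m by auto
  have dz: "Dom A m \<in> fib_obj (Dom C ?s)" using m by (simp add: fib_obj_iff)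
  have vert_m: "vertical_part m \<in> fib_arr ?y" using vertical_part_fib[OF m] by auto
  have b: "inv_defect ?s (Dom A m) \<in> fib_arr (fo iC ?y)"
    "Cod A (inv_defect ?s (Dom A m)) = transport_obj (fm iC ?s) (fo iA (Dom A m))"
    "Dom A (inv_defect ?s (Dom A m)) = fo iA (transport_obj ?s (Dom A m))"
    using inv_defect_fib[OF s dz] m by auto
  have vert_iA: "vertical_part (fm iA m)
      = Cmp A (fm iA (vertical_part m)) (ginv A (inv_defect ?s (Dom A m)))"
    using m unfolding vertical_part_def inv_defect_def by (simp add: A.ginv_cmp)
  have tau: "vertical_code (fm iA m)
      = Cmp (Fib (fo iC ?y)) (fm (Fib_inv ?y) (vertical_code m)) (ginv (Fib (fo iC ?y)) (twist ?s
        (enc_obj ?x (Dom A m))))"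
  proof -
    have "twist ?s (enc_obj ?x (Dom A m)) = enc_arr (fo iC ?y) (inv_defect ?s (Dom A m))"
      using m dz by (simp add: twist_def)
    moreover have "fm (Fib_inv ?y) (vertical_code m) = enc_arr (fo iC ?y) (fm iA (vertical_part m))"
      using vert_m m by (simp add: Fib_inv_def vertical_code_def)
    moreover have "Dom A (fm iA (vertical_part m)) = fo iA (transport_obj ?s (Dom A m))"
      "fm iA (vertical_part m) \<in> fib_arr (fo iC ?y)"
      using vertical_part_fib[OF m] vert_m x by (auto simp: fib_arr_in_Arr)
    ultimately show ?thesis using vert_iA b m fib_arr_in_Arr[OF b(1)] by (simp add: vertical_code_def)
  qed
  show ?thesis using m x s tau
    by (simp add: tcls_arr_def Ut_inv_arr_def tcls_obj_def Ut_inv_obj_def finv_Fib_inv twist_iC)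
qed

lemma gpdG_mor_tcls: "gpdG_mor A iA (Ut kappa) Ut_inv tcls"
  unfolding gpdG_mor_def is_functor_def tcls_def Ut_inv_def fst_conv snd_conv Ut_simps
proof (intro conjI ballI impI)
  fix x assume "x \<in> Obj A" then show "tcls_obj x \<in> Ut_obj kappa" by (rule tcls_obj_Ut)
next
  fix m assume m: "m \<in> Arr A"
  then show "tcls_arr m \<in> hom (Ut kappa) (tcls_obj (Dom A m)) (tcls_obj (Cod A m))"
    using tcls_arr_Ut[OF m] by (simp add: hom_def tcls_arr_def)
next
  fix x assume "x \<in> Obj A" then show "tcls_arr (Ide A x) = Ut_ide (tcls_obj x)"
    by (rule tcls_arr_ide)
next
  fix m n assume "m \<in> Arr A" "n \<in> Arr A" "Cod A m = Dom A n"
  then show "tcls_arr (Cmp A n m) = Ut_cmp (tcls_arr n) (tcls_arr m)" by (rule tcls_arr_cmp)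
next
  fix x assume "x \<in> Obj A" then show "tcls_obj (fo iA x) = Ut_inv_obj (tcls_obj x)"
    by (rule tcls_obj_iA)
next
  fix m assume "m \<in> Arr A" then show "tcls_arr (fm iA m) = Ut_inv_arr (tcls_arr m)"
    by (rule tcls_arr_iA)
qed

lemma tcls_obj_inj:
  "a \<in> Obj A \<Longrightarrow> b \<in> Obj A \<Longrightarrow> fo f a = fo f b \<Longrightarrow> tcls_obj a = tcls_obj b \<Longrightarrow> a = b"
  by (simp add: tcls_obj_def fib_obj_iff)

lemma cls_f_eq_p_tcls_obj: "fo cls (fo f a) = fo p (fo tcls a)"
  and cls_f_eq_p_tcls_arr: "m \<in> Arr A \<Longrightarrow> fm cls (fm f m) = fm p (fm tcls m)"
  by (simp_all add: cls_def tcls_def cls_arr_def tcls_arr_def p_arr_def p_obj_def tcls_obj_def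
    cls_obj_def)

lemma bij_comparison_obj:
  "bij_betw (\<lambda>a. (fo f a, tcls_obj a)) (Obj A) (Obj (pb_gpd C (Ut kappa) cls p))"
  unfolding bij_betw_def
proof
  show "inj_on (\<lambda>a. (fo f a, tcls_obj a)) (Obj A)" using tcls_obj_inj by (auto simp: inj_on_def)
  show "(\<lambda>a. (fo f a, tcls_obj a)) ` Obj A = Obj (pb_gpd C (Ut kappa) cls p)"
  proof
    show "(\<lambda>a. (fo f a, tcls_obj a)) ` Obj A \<subseteq> Obj (pb_gpd C (Ut kappa) cls p)"
      using tcls_obj_Ut by (auto simp: cls_def tcls_obj_def cls_obj_def p_obj_def)
  next
    show "Obj (pb_gpd C (Ut kappa) cls p) \<subseteq> (\<lambda>a. (fo f a, tcls_obj a)) ` Obj A"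
    proof
      fix w assume w: "w \<in> Obj (pb_gpd C (Ut kappa) cls p)"
      obtain x t where wd: "w = (x, t)" by (cases w) auto
      obtain B0 B1 k psi where td: "t = (B0,B1,k,psi)" by (cases t) auto
      have x: "x \<in> Obj C" and t: "t \<in> Ut_obj kappa" and e: "cls_obj x = p_obj t"
        using w by (auto simp: wd cls_def)
      have td': "t = (Fib x, Fib (fo iC x), k, Fib_inv x)" using e
        by (simp add: td cls_obj_def p_obj_def)
      have "k \<in> Obj (Fib x)" using t by (simp add: td' Ut_obj_iff)
      then obtain a where a: "a \<in> fib_obj x" "k = enc_obj x a" by (auto simp: Obj_Fib)
      have "w = (fo f a, tcls_obj a)" using a by (simp add: wd td' tcls_obj_def fib_obj_iff)
      then show "w \<in> (\<lambda>a. (fo f a, tcls_obj a)) ` Obj A" using a by (auto simp: fib_obj_iff)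
    qed
  qed
qed

lemma vertical_part_cancel:
  assumes m: "m \<in> Arr A"
  shows "Cmp A (vertical_part m) (c (fm f m) (Dom A m)) = m"
  using m by (simp add: vertical_part_def)

lemma inj_on_comparison_arr: "inj_on (\<lambda>m. (fm f m, tcls_arr m)) (Arr A)"
proof (rule inj_onI)
  fix m m' assume m: "m \<in> Arr A" and m': "m' \<in> Arr A"
    and e: "(fm f m, tcls_arr m) = (fm f m', tcls_arr m')"
  have ef: "fm f m = fm f m'" and eg: "tcls_arr m = tcls_arr m'" using e by auto
  have dd: "Dom A m = Dom A m'"
    using tcls_obj_inj[of "Dom A m" "Dom A m'"] eg m m' f.map_dom[OF m] f.map_dom[OF m'] ef
      by (simp add: tcls_arr_def)
  have cc: "Cod A m = Cod A m'"
    using tcls_obj_inj[of "Cod A m" "Cod A m'"] eg m m' f.map_cod[OF m] f.map_cod[OF m'] ef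
      by (simp add: tcls_arr_def)
  have "vertical_code m = vertical_code m'" using eg by (simp add: tcls_arr_def)
  then have "vertical_part m = vertical_part m'"
    using vertical_part_fib[OF m] vertical_part_fib[OF m'] ef cc m m'
      by (simp add: vertical_code_def)
  then show "m = m'" using vertical_part_cancel[OF m] vertical_part_cancel[OF m'] ef dd by metis
qed

lemma ex_arr_with_comparison_images:
  assumes s: "s \<in> Arr C" and t: "t \<in> Ut_arr kappa" and e: "cls_arr s = p_arr t"
  shows "\<exists>m\<in>Arr A. fm f m = s \<and> tcls_arr m = t"
proof -
  let ?x = "Dom C s" and ?y = "Cod C s"
  obtain s1 s2 r0 r1 tau al' where td: "t = (s1,s2,r0,r1,tau,al')" by (cases t) auto
  obtain B0 B1 k psi where s1d: "s1 = (B0,B1,k,psi)" by (cases s1) auto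
  obtain B0' B1' k' psi' where s2d: "s2 = (B0',B1',k',psi')" by (cases s2) auto
  have e': "B0 = Fib ?x" "B1 = Fib (fo iC ?x)" "psi = Fib_inv ?x" "B0' = Fib ?y"
    "B1' = Fib (fo iC ?y)" "psi' = Fib_inv ?y"
    "r0 = transport s" "r1 = transport (fm iC s)" "al' = twist s"
    using e by (simp_all add: cls_arr_def td s1d s2d p_arr_def p_obj_def cls_obj_def)
  have tm: "k \<in> Obj (Fib ?x)" "k' \<in> Obj (Fib ?y)" "tau \<in> hom (Fib ?y) (fo (transport s) k) k'"
    using t by (simp_all add: td s1d s2d e' Ut_arr_iff Ut_obj_iff)
  obtain z where z: "z \<in> fib_obj ?x" "k = enc_obj ?x z" using tm(1) by (auto simp: Obj_Fib)
  obtain z' where z': "z' \<in> fib_obj ?y" "k' = enc_obj ?y z'" using tm(2) by (auto simp: Obj_Fib)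
  obtain n where n: "n \<in> fib_arr ?y"
    "tau = enc_arr ?y n" using tm(3) by (auto simp: hom_def Arr_Fib)
  have tz: "transport_obj s z \<in> fib_obj ?y" using transport_obj_fib[OF s z(1)] .
  have nd: "Dom A n = transport_obj s z" "Cod A n = z'"
    using tm(3) n z z' tz transport_enc_obj[OF s z(1)] fib_arr_dom[OF n(1)] fib_arr_cod[OF n(1)]
      by (auto simp: hom_def)
  note Z = fib_objD[OF z(1)] and N = fib_arrD[OF n(1)]
  define m where "m = Cmp A n (c s z)"
  have mA: "m \<in> Arr A" "fm f m = s" "Dom A m = z" "Cod A m = z'"
    using Z N nd s by (simp_all add: m_def transport_obj_def)
  have "vertical_part m = n" using Z N nd s by (simp add: m_def vertical_part_def transport_obj_def)
  then have "tcls_arr m = t" using mA s z z' n fib_objD[OF z'(1)] fib_objD[OF z(1)]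
    by (simp add: tcls_arr_def td s1d s2d e' tcls_obj_def vertical_code_def)
  then show ?thesis using mA by blast
qed

lemma bij_comparison_arr:
  "bij_betw (\<lambda>m. (fm f m, tcls_arr m)) (Arr A) (Arr (pb_gpd C (Ut kappa) cls p))"
  unfolding bij_betw_def
proof
  show "(\<lambda>m. (fm f m, tcls_arr m)) ` Arr A = Arr (pb_gpd C (Ut kappa) cls p)"
  proof
    show "(\<lambda>m. (fm f m, tcls_arr m)) ` Arr A \<subseteq> Arr (pb_gpd C (Ut kappa) cls p)"
      using tcls_arr_Ut cls_f_eq_p_tcls_arr by (auto simp: cls_def tcls_def)
    show "Arr (pb_gpd C (Ut kappa) cls p) \<subseteq> (\<lambda>m. (fm f m, tcls_arr m)) ` Arr A"
    proof
      fix w assume "w \<in> Arr (pb_gpd C (Ut kappa) cls p)"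
      then obtain s t where w: "w = (s, t)" and "s \<in> Arr C" "t \<in> Ut_arr kappa" "cls_arr s = p_arr t"
        by (auto simp: cls_def)
      then obtain m where "m \<in> Arr A" "fm f m = s" "tcls_arr m = t"
        using ex_arr_with_comparison_images by blast
      then show "w \<in> (\<lambda>m. (fm f m, tcls_arr m)) ` Arr A" by (auto simp: w image_iff)
    qed
  qed
qed (rule inj_on_comparison_arr)

lemma f_is_pullback_of_p: "is_pullback_of_p kappa A iA C iC f"
  unfolding is_pullback_of_p_def
proof (intro exI)
  have "gpdG_mor A iA (pb_gpd C (Ut kappa) cls p) (pb_inv iC Ut_inv) ((\<lambda>a. (fo f a, fo tcls a)), (\<lambda>m. (fm f m, fm tcls m)))"
    using f_gpdG_mor gpdG_mor_tcls cls_f_eq_p_tcls_obj cls_f_eq_p_tcls_arr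
      by (intro gpdG_mor_pb_pairing) auto
  then show "is_pullback_square A iA C iC (Ut kappa) Ut_inv (U kappa) U_inv f tcls cls p"
    unfolding is_pullback_square_def gpdG_iso_def
    using f_gpdG_mor gpdG_mor_tcls gpdG_mor_cls p_gpdG_mor cls_f_eq_p_tcls_obj cls_f_eq_p_tcls_arr
      bij_comparison_obj bij_comparison_arr by (simp add: tcls_def)
qed

end

theorem lemma4p17:
  fixes kappa :: "'k rel"
    and A :: "('ao, 'am) gpd" and iA :: "('ao, 'am, 'ao, 'am) fn"
    and C :: "('co, 'cm) gpd" and iC :: "('co, 'cm, 'co, 'cm) fn"
    and f :: "('ao, 'am, 'co, 'cm) fn"
  assumes "inaccessible kappa"
    and "gpdG A iA" and "gpdG C iC"
    and "gpdG_mor A iA C iC f"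
  shows "is_pullback_of_p kappa A iA C iC f \<longleftrightarrow>
         (split_fibration A C f \<and> (\<forall>x\<in>Obj C. small kappa (fiber A C f x)))"
proof
  assume "is_pullback_of_p kappa A iA C iC f"
  then show "split_fibration A C f \<and> (\<forall>x\<in>Obj C. small kappa (fiber A C f x))"
    using small_split_fibration_if_pullback_of_p assms(2,3) by (blast dest: gpdG_def[THEN iffD1])
next
  assume "split_fibration A C f \<and> (\<forall>x\<in>Obj C. small kappa (fiber A C f x))"
  then obtain c where "split_cleavage A C f c" "\<forall>x\<in>Obj C. small kappa (fiber A C f x)"
    unfolding split_fibration_def by blast
  then interpret small_split_fibration kappa A iA C iC f c
    using assms by unfold_locales (auto simp: inaccessible_def)
  show "is_pullback_of_p kappa A iA C iC f" by (rule f_is_pullback_of_p)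
qed

end
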